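(* Let $\mathbb{K}$ be a field, $m\ge 3$, $R=\mathbb{K}[T_1,\dots,T_m]$, and $I=\langle T_1^{a_1},\dots,T_m^{a_m},T_1^{b_1}\cdots T_m^{b_m}\rangle$ with $0\le b_i<a_i$ for all $i$ and $b_i\ne0$ for at least two $i$; let $L\subset S=R[X_1,\dots,X_m,W]$ be the defining ideal of its Rees algebra. Let $\mathcal{C}\subset\{\mathbf{c}\in\mathbb{N}^m\mid |\mathbf{c}|\ge2\}$ be a finite set such that $\Gamma_0\cup\{\mathcal{P}(W^{|\mathbf{c}|},\mathbf{X}^{\mathbf{c}})\mid \mathbf{c}\in\mathcal{C}\}$ is a Gröbner basis of $L$ with respect to $\tau$, and such that $\mathcal{C}$ is closed: if $\mathbf{c}\in\mathcal{C}$, $|\mathbf{c}'|\ge 2$ and $\mathbf{c}'\prec_{\tau'}\mathbf{c}$, then $\mathbf{c}'\in\mathcal{C}$. Order $\mathcal{C}=\{\mathbf{c}_1\prec_{\tau'}\cdots\prec_{\tau'}\mathbf{c}_N\}$ and for $0\le j\le N$ set $\mathcal{H}_j=\langle\Gamma_0\cup\{\mathcal{P}(W^{|\mathbf{c}_i|},\mathbf{X}^{\mathbf{c}_i})\mid 1\le i\le j\}\rangle$. Then for every $1\le j\le N$, the colon ideal $\operatorname{in}(\mathcal{H}_{j-1}):\operatorname{in}(\mathcal{P}(W^{|\mathbf{c}_j|},\mathbf{X}^{\mathbf{c}_j}))$ is extended from $R$, i.e., it equals $(J\cap R)S$ where $J$ denotes this colon ideal.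
   Context: Write $\mathbf{T}^{\mathbf{b}}=T_1^{b_1}\cdots T_m^{b_m}$. $L$ is the kernel of the $R$-algebra map $S\to R[Z]$, $X_i\mapsto T_i^{a_i}Z$, $W\mapsto\mathbf{T}^{\mathbf{b}}Z$. Set $X_{m+1}:=W$; for $\mathbf{c}\in\mathbb{N}^m$, $\mathbf{X}^{\mathbf{c}}=\prod X_i^{c_i}$ and $|\mathbf{c}|=\sum c_i$. Let $\Psi:S\to R$ be the $R$-algebra map $X_i\mapsto T_i^{a_i}$, $W\mapsto\mathbf{T}^{\mathbf{b}}$. For monomials $M,N$ in $X_1,\dots,X_m,W$, with $g=\gcd(\Psi(M),\Psi(N))$, set $\mathcal{P}(M,N)=\frac{\Psi(N)}{g}M-\frac{\Psi(M)}{g}N$. $\Gamma_0=\{\mathcal{P}(X_i,X_j)\mid 1\le j<i\le m+1\}$. The order $\tau$ is lex on $S$ with $W>X_m>\cdots>X_1>T_1>\cdots>T_m$; $\operatorname{in}(\cdot)$ denotes leading monomial / initial ideal with respect to $\tau$. The total order $\tau'$ on $\mathbb{N}^m$: $\boldsymbol\alpha\prec_{\tau'}\boldsymbol\beta$ iff $|\boldsymbol\alpha|<|\boldsymbol\beta|$, or $|\boldsymbol\alpha|=|\boldsymbol\beta|$ and there is $i_0$ with $\alpha_{i_0}>\beta_{i_0}$ and $\alpha_i=\beta_i$ for all $i>i_0$. *)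

theory Defs
  imports Main "HOL-Library.Poly_Mapping"
begin

text \<open>Variables of the ambient polynomial ring: T i (1 \<le> i \<le> m), X i (1 \<le> i \<le> m),
  W, and the auxiliary variable Z used for the Rees map S \<rightarrow> R[Z].\<close>

datatype var = T nat | X nat | Wv | Zv

type_synonym mon = "var \<Rightarrow>\<^sub>0 nat"
type_synonym 'k mpoly = "mon \<Rightarrow>\<^sub>0 'k"

definition monom :: "mon \<Rightarrow> 'k::zero \<Rightarrow> 'k mpoly" where
  "monom \<alpha> c = Poly_Mapping.single \<alpha> c"

definition Rvars :: "nat \<Rightarrow> var set" where
  "Rvars m = T ` {1..m}"

definition Svars :: "nat \<Rightarrow> var set" where
  "Svars m = T ` {1..m} \<union> X ` {1..m} \<union> {Wv}"

definition polys_in :: "var set \<Rightarrow> ('k::zero) mpoly set" where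
  "polys_in V = {p :: 'k mpoly. \<forall>\<alpha>\<in>Poly_Mapping.keys p. Poly_Mapping.keys \<alpha> \<subseteq> V}"

abbreviation Rring :: "nat \<Rightarrow> ('k::zero) mpoly set" where
  "Rring m \<equiv> polys_in (Rvars m)"

abbreviation Sring :: "nat \<Rightarrow> ('k::zero) mpoly set" where
  "Sring m \<equiv> polys_in (Svars m)"

definition ideal_gen :: "('k::comm_ring_1) mpoly set \<Rightarrow> 'k mpoly set \<Rightarrow> 'k mpoly set" where
  "ideal_gen A G = {p. \<exists>F c. finite F \<and> F \<subseteq> G \<and> (\<forall>g\<in>F. c g \<in> A) \<and> p = (\<Sum>g\<in>F. c g * g)}"

definition colon_ideal :: "('k::comm_ring_1) mpoly set \<Rightarrow> 'k mpoly set \<Rightarrow> 'k mpoly \<Rightarrow> 'k mpoly set" where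
  "colon_ideal A I f = {g \<in> A. g * f \<in> I}"

text \<open>If every variable is sent to a monomial, the algebra map sends a monomial x^\<alpha>
  to the monomial x^(\<phi> \<alpha>), \<phi> additive; it is extended linearly.\<close>
definition mon_map :: "(mon \<Rightarrow> mon) \<Rightarrow> ('k::comm_ring_1) mpoly \<Rightarrow> 'k mpoly" where
  "mon_map \<phi> p = (\<Sum>\<alpha>\<in>Poly_Mapping.keys p. monom (\<phi> \<alpha>) (Poly_Mapping.lookup p \<alpha>))"

definition Texp :: "nat \<Rightarrow> (nat \<Rightarrow> nat) \<Rightarrow> mon" where
  "Texp m b = (\<Sum>i\<in>{1..m}. Poly_Mapping.single (T i) (b i))"

text \<open>\<Psi>: T_i \<mapsto> T_i, X_i \<mapsto> T_i^{a_i}, W \<mapsto> T^b, on exponents.\<close>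
definition psi_exp :: "nat \<Rightarrow> (nat \<Rightarrow> nat) \<Rightarrow> (nat \<Rightarrow> nat) \<Rightarrow> mon \<Rightarrow> mon" where
  "psi_exp m a b \<alpha> = (\<Sum>i\<in>{1..m}. Poly_Mapping.single (T i)
       (Poly_Mapping.lookup \<alpha> (T i) + Poly_Mapping.lookup \<alpha> (X i) * a i + Poly_Mapping.lookup \<alpha> Wv * b i))"

definition Psi :: "nat \<Rightarrow> (nat \<Rightarrow> nat) \<Rightarrow> (nat \<Rightarrow> nat) \<Rightarrow> ('k::comm_ring_1) mpoly \<Rightarrow> 'k mpoly" where
  "Psi m a b = mon_map (psi_exp m a b)"

text \<open>Rees map S \<rightarrow> R[Z]: T_i \<mapsto> T_i, X_i \<mapsto> T_i^{a_i} Z, W \<mapsto> T^b Z.\<close>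
definition rees_exp :: "nat \<Rightarrow> (nat \<Rightarrow> nat) \<Rightarrow> (nat \<Rightarrow> nat) \<Rightarrow> mon \<Rightarrow> mon" where
  "rees_exp m a b \<alpha> = psi_exp m a b \<alpha> +
     Poly_Mapping.single Zv (Poly_Mapping.lookup \<alpha> Wv + (\<Sum>i\<in>{1..m}. Poly_Mapping.lookup \<alpha> (X i)))"

definition rees_map :: "nat \<Rightarrow> (nat \<Rightarrow> nat) \<Rightarrow> (nat \<Rightarrow> nat) \<Rightarrow> ('k::comm_ring_1) mpoly \<Rightarrow> 'k mpoly" where
  "rees_map m a b = mon_map (rees_exp m a b)"

definition Lideal :: "nat \<Rightarrow> (nat \<Rightarrow> nat) \<Rightarrow> (nat \<Rightarrow> nat) \<Rightarrow> ('k::comm_ring_1) mpoly set" where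
  "Lideal m a b = {p \<in> Sring m. rees_map m a b p = 0}"

lift_definition mgcd :: "mon \<Rightarrow> mon \<Rightarrow> mon" is "\<lambda>f g v. min (f v) (g v)"
proof -
  fix f g :: "var \<Rightarrow> nat"
  assume "finite {v. f v \<noteq> 0}"
  then show "finite {v. min (f v) (g v) \<noteq> 0}"
    by (rule finite_subset[rotated]) auto
qed

text \<open>For monomials M = x^\<mu>, N = x^\<nu> with g = gcd(\<Psi>(M),\<Psi>(N)):
  P(M,N) = (\<Psi>(N)/g) M - (\<Psi>(M)/g) N.\<close>
definition Pbin :: "nat \<Rightarrow> (nat \<Rightarrow> nat) \<Rightarrow> (nat \<Rightarrow> nat) \<Rightarrow> mon \<Rightarrow> mon \<Rightarrow> ('k::comm_ring_1) mpoly" where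
  "Pbin m a b \<mu> \<nu> =
     (let g = mgcd (psi_exp m a b \<mu>) (psi_exp m a b \<nu>) in
       monom ((psi_exp m a b \<nu> - g) + \<mu>) 1 - monom ((psi_exp m a b \<mu> - g) + \<nu>) 1)"

definition Xv :: "nat \<Rightarrow> nat \<Rightarrow> var" where
  "Xv m i = (if i = m + 1 then Wv else X i)"

definition Gamma0 :: "nat \<Rightarrow> (nat \<Rightarrow> nat) \<Rightarrow> (nat \<Rightarrow> nat) \<Rightarrow> ('k::comm_ring_1) mpoly set" where
  "Gamma0 m a b = {Pbin m a b (Poly_Mapping.single (Xv m i) 1) (Poly_Mapping.single (Xv m j) 1)
                    | i j. 1 \<le> j \<and> j < i \<and> i \<le> m + 1}"

definition Nvec :: "nat \<Rightarrow> (nat \<Rightarrow> nat) set" where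
  "Nvec m = {c. \<forall>i. i \<notin> {1..m} \<longrightarrow> c i = 0}"

definition vabs :: "nat \<Rightarrow> (nat \<Rightarrow> nat) \<Rightarrow> nat" where
  "vabs m c = (\<Sum>i\<in>{1..m}. c i)"

definition Xmon :: "nat \<Rightarrow> (nat \<Rightarrow> nat) \<Rightarrow> mon" where
  "Xmon m c = (\<Sum>i\<in>{1..m}. Poly_Mapping.single (X i) (c i))"

definition Wmon :: "nat \<Rightarrow> mon" where
  "Wmon k = Poly_Mapping.single Wv k"

definition tau'_less :: "nat \<Rightarrow> (nat \<Rightarrow> nat) \<Rightarrow> (nat \<Rightarrow> nat) \<Rightarrow> bool" where
  "tau'_less m \<alpha> \<beta> \<longleftrightarrow> vabs m \<alpha> < vabs m \<beta> \<or>
     (vabs m \<alpha> = vabs m \<beta> \<and>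
       (\<exists>i0\<in>{1..m}. \<alpha> i0 > \<beta> i0 \<and> (\<forall>i\<in>{1..m}. i > i0 \<longrightarrow> \<alpha> i = \<beta> i)))"

definition var_rank :: "nat \<Rightarrow> nat \<Rightarrow> var" where
  "var_rank m k = (if k = 0 then Wv
                   else if k \<le> m then X (m + 1 - k)
                   else if k \<le> 2 * m then T (k - m)
                   else Zv)"

definition lex_less :: "nat \<Rightarrow> mon \<Rightarrow> mon \<Rightarrow> bool" where
  "lex_less m \<alpha> \<beta> \<longleftrightarrow> (\<exists>k. (\<forall>j<k. Poly_Mapping.lookup \<alpha> (var_rank m j) = Poly_Mapping.lookup \<beta> (var_rank m j))
                              \<and> Poly_Mapping.lookup \<alpha> (var_rank m k) < Poly_Mapping.lookup \<beta> (var_rank m k))"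

definition lead_mon :: "nat \<Rightarrow> ('k::zero) mpoly \<Rightarrow> mon" where
  "lead_mon m p = (THE \<alpha>. \<alpha> \<in> Poly_Mapping.keys p \<and> (\<forall>\<beta>\<in>Poly_Mapping.keys p. \<beta> \<noteq> \<alpha> \<longrightarrow> lex_less m \<beta> \<alpha>))"

definition init :: "nat \<Rightarrow> ('k::comm_ring_1) mpoly \<Rightarrow> 'k mpoly" where
  "init m p = monom (lead_mon m p) 1"

definition init_ideal :: "nat \<Rightarrow> ('k::comm_ring_1) mpoly set \<Rightarrow> 'k mpoly set" where
  "init_ideal m H = ideal_gen (Sring m) {init m p | p. p \<in> H \<and> p \<noteq> 0}"

definition groebner_basis :: "nat \<Rightarrow> ('k::comm_ring_1) mpoly set \<Rightarrow> 'k mpoly set \<Rightarrow> bool" where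
  "groebner_basis m G I \<longleftrightarrow> finite G \<and> G \<subseteq> I \<and>
     init_ideal m I = ideal_gen (Sring m) {init m g | g. g \<in> G \<and> g \<noteq> 0}"

end

(*
  Each generator of the Groebner basis is a binomial x^p - x^q with x^p > x^q, i.e. a rewrite rule
  on monomials, and if such rules are locally confluent, the leading monomial of every element of
  the ideal generated by their binomials is reducible. For the initial segment
  H_(j-1) = <Gamma_0, P(W^|c_i|, X^c_i) : i < j> this confluence is inherited from the full
  Groebner basis. A critical pair has W-degree at most K = |c_j|, and its normal forms under the
  truncated system stay irreducible for the full system: an omitted rule has W-degree at least K,
  so it could only apply after a step with W-free left-hand side, and such a step leaves a power
  T_i^a_i that the rule of W X_i still reduces. Irreducible monomials of the full system are
  determined by their image under the Rees map, so the normal forms coincide. Hence in(H_(j-1)) is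
  generated by the left-hand sides of the truncated system. Whether one of these divides
  x^alpha x^M, with x^M = in(P(W^K, X^c_j)), only depends on the T-part of x^alpha, and this makes
  the colon ideal in(H_(j-1)) : x^M extended from R.
*)

theory Submission
  imports Defs
begin

abbreviation lookup :: "('a \<Rightarrow>\<^sub>0 'b::zero) \<Rightarrow> 'a \<Rightarrow> 'b" where
  "lookup \<equiv> Poly_Mapping.lookup"

abbreviation keys :: "('a \<Rightarrow>\<^sub>0 'b::zero) \<Rightarrow> 'a set" where
  "keys \<equiv> Poly_Mapping.keys"

definition Smons :: "nat \<Rightarrow> mon set" where
  "Smons m = {\<alpha>. keys \<alpha> \<subseteq> Svars m}"

definition mon_dvd :: "mon \<Rightarrow> mon \<Rightarrow> bool" where
  "mon_dvd p q \<longleftrightarrow> (\<forall>v. lookup p v \<le> lookup q v)"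

lemma keys_add_mon: "keys ((\<alpha>::'a \<Rightarrow>\<^sub>0 nat) + \<beta>) = keys \<alpha> \<union> keys \<beta>"
  by (auto simp: in_keys_iff lookup_add)

lemma Smons_add [simp]: "\<alpha> + \<beta> \<in> Smons m \<longleftrightarrow> \<alpha> \<in> Smons m \<and> \<beta> \<in> Smons m"
  by (auto simp: Smons_def keys_add_mon)

lemma Smons_diff: "\<alpha> \<in> Smons m \<Longrightarrow> (\<alpha>::mon) - \<beta> \<in> Smons m"
  unfolding Smons_def by (auto simp: in_keys_iff lookup_minus)

lemma lookup_Zv_Smons: "\<alpha> \<in> Smons m \<Longrightarrow> lookup \<alpha> Zv = 0"
  unfolding Smons_def Svars_def by (auto simp: in_keys_iff)

lemma mon_dvd_diff_add: "mon_dvd p q \<Longrightarrow> q = (q - p) + p"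
  unfolding mon_dvd_def by (intro poly_mapping_eqI) (simp add: lookup_add lookup_minus)

lemma mon_dvd_add: "mon_dvd p (s + p)"
  unfolding mon_dvd_def by (simp add: lookup_add)

lemma mon_dvd_trans: "mon_dvd p q \<Longrightarrow> mon_dvd q r \<Longrightarrow> mon_dvd p r"
  unfolding mon_dvd_def using order_trans by blast

lemma var_rank_onto_Svars:
  assumes "x \<in> Svars m" shows "\<exists>k \<le> 2 * m. var_rank m k = x"
proof -
  consider (T) i where "x = T i" "i \<in> {1..m}" | (X) i where "x = X i" "i \<in> {1..m}" | (W) "x = Wv"
    using assms unfolding Svars_def by blast
  then show ?thesis
  proof cases
    case T then show ?thesis by (intro exI[of _ "m + i"]) (auto simp: var_rank_def)
  next
    case X then show ?thesis by (intro exI[of _ "m + 1 - i"]) (auto simp: var_rank_def)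
  next
    case W then show ?thesis by (intro exI[of _ 0]) (auto simp: var_rank_def)
  qed
qed

lemma Smons_eqI:
  assumes "\<alpha> \<in> Smons m" "\<beta> \<in> Smons m" "\<And>k. lookup \<alpha> (var_rank m k) = lookup \<beta> (var_rank m k)"
  shows "\<alpha> = \<beta>"
proof (rule poly_mapping_eqI)
  fix x
  show "lookup \<alpha> x = lookup \<beta> x"
  proof (cases "x \<in> Svars m")
    case True
    then obtain k where "var_rank m k = x" using var_rank_onto_Svars by blast
    then show ?thesis using assms(3) by metis
  next
    case False
    then have "x \<notin> keys \<alpha>" "x \<notin> keys \<beta>" using assms(1,2) unfolding Smons_def by blast+
    then show ?thesis by (simp add: in_keys_iff)
  qed
qed

lemma lex_less_irrefl: "\<not> lex_less m \<alpha> \<alpha>"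
  by (auto simp: lex_less_def)

lemma lex_less_trans:
  assumes "lex_less m \<alpha> \<beta>" "lex_less m \<beta> \<gamma>" shows "lex_less m \<alpha> \<gamma>"
proof -
  obtain k1 where k1: "\<forall>j<k1. lookup \<alpha> (var_rank m j) = lookup \<beta> (var_rank m j)"
     "lookup \<alpha> (var_rank m k1) < lookup \<beta> (var_rank m k1)" using assms(1) by (auto simp: lex_less_def)
  obtain k2 where k2: "\<forall>j<k2. lookup \<beta> (var_rank m j) = lookup \<gamma> (var_rank m j)"
     "lookup \<beta> (var_rank m k2) < lookup \<gamma> (var_rank m k2)" using assms(2) by (auto simp: lex_less_def)
  show ?thesis
  proof (cases k1 k2 rule: linorder_cases)
    case less
    then show ?thesis using k1 k2 unfolding lex_less_def by (intro exI[of _ k1]) auto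
  next
    case equal
    then show ?thesis using k1 k2 unfolding lex_less_def by (intro exI[of _ k1]) auto
  next
    case greater
    then show ?thesis using k1 k2 unfolding lex_less_def by (intro exI[of _ k2]) auto
  qed
qed

lemma lex_less_asym: "lex_less m \<alpha> \<beta> \<Longrightarrow> \<not> lex_less m \<beta> \<alpha>"
  using lex_less_trans lex_less_irrefl by blast

lemma lex_less_add_left: "lex_less m \<alpha> \<beta> \<Longrightarrow> lex_less m (s + \<alpha>) (s + \<beta>)"
  unfolding lex_less_def by (auto simp: lookup_add)

lemma lex_less_total:
  assumes "\<alpha> \<in> Smons m" "\<beta> \<in> Smons m" "\<alpha> \<noteq> \<beta>"
  shows "lex_less m \<alpha> \<beta> \<or> lex_less m \<beta> \<alpha>"
proof -
  have ex: "\<exists>k. lookup \<alpha> (var_rank m k) \<noteq> lookup \<beta> (var_rank m k)"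
    using Smons_eqI[OF assms(1,2)] assms(3) by blast
  define k0 where "k0 = (LEAST k. lookup \<alpha> (var_rank m k) \<noteq> lookup \<beta> (var_rank m k))"
  have d: "lookup \<alpha> (var_rank m k0) \<noteq> lookup \<beta> (var_rank m k0)"
    unfolding k0_def using LeastI_ex[OF ex] .
  have e: "\<forall>j<k0. lookup \<alpha> (var_rank m j) = lookup \<beta> (var_rank m j)"
    unfolding k0_def using not_less_Least by blast
  show ?thesis
  proof (cases "lookup \<alpha> (var_rank m k0) < lookup \<beta> (var_rank m k0)")
    case True
    then show ?thesis unfolding lex_less_def using e by blast
  next
    case False
    then have "lookup \<beta> (var_rank m k0) < lookup \<alpha> (var_rank m k0)" using d by simp
    then show ?thesis unfolding lex_less_def using e by (metis (no_types))
  qed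
qed

text \<open>On monomials of S only the first \<open>2m + 1\<close> variable ranks matter, so \<open>lex_less\<close> embeds into
  the lexicographic order on lists of that length.\<close>

definition lex_vector :: "nat \<Rightarrow> mon \<Rightarrow> nat list" where
  "lex_vector m \<alpha> = map (\<lambda>k. lookup \<alpha> (var_rank m k)) [0..<Suc (2 * m)]"

lemma lex_less_imp_lexn:
  assumes "\<alpha> \<in> Smons m" "\<beta> \<in> Smons m" "lex_less m \<alpha> \<beta>"
  shows "(lex_vector m \<alpha>, lex_vector m \<beta>) \<in> lexn less_than (Suc (2 * m))"
proof -
  obtain k where k: "\<forall>j<k. lookup \<alpha> (var_rank m j) = lookup \<beta> (var_rank m j)"
     "lookup \<alpha> (var_rank m k) < lookup \<beta> (var_rank m k)" using assms(3) by (auto simp: lex_less_def)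
  have kle: "k < Suc (2 * m)"
  proof (rule ccontr)
    assume "\<not> ?thesis"
    then have "var_rank m k = Zv" by (auto simp: var_rank_def)
    then show False using k(2) lookup_Zv_Smons[OF assms(1)] lookup_Zv_Smons[OF assms(2)] by simp
  qed
  let ?a = "lex_vector m \<alpha>" and ?b = "lex_vector m \<beta>"
  have la: "length ?a = Suc (2 * m)" and lb: "length ?b = Suc (2 * m)" by (simp_all add: lex_vector_def)
  have tk: "take k ?a = take k ?b"
    using k(1) kle by (intro nth_equalityI) (auto simp: lex_vector_def)
  have "?a = take k ?a @ ?a ! k # drop (Suc k) ?a" by (rule id_take_nth_drop) (simp add: la kle)
  moreover have "?b = take k ?a @ ?b ! k # drop (Suc k) ?b" unfolding tk by (rule id_take_nth_drop) (simp add: lb kle)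
  moreover have "(?a ! k, ?b ! k) \<in> less_than" using k(2) kle by (simp add: lex_vector_def del: upt_Suc)
  ultimately show ?thesis unfolding lexn_conv using la lb by blast
qed

lemma wf_lex_less: "wf {(\<alpha>, \<beta>). \<alpha> \<in> Smons m \<and> \<beta> \<in> Smons m \<and> lex_less m \<alpha> \<beta>}"
proof (rule wf_subset)
  show "wf (inv_image (lexn less_than (Suc (2 * m))) (lex_vector m))"
    by (intro wf_inv_image wf_lexn wf_less_than)
  show "{(\<alpha>, \<beta>). \<alpha> \<in> Smons m \<and> \<beta> \<in> Smons m \<and> lex_less m \<alpha> \<beta>}
          \<subseteq> inv_image (lexn less_than (Suc (2 * m))) (lex_vector m)"
    using lex_less_imp_lexn by auto
qed

lemma lex_max_exists:
  assumes "finite A" "A \<noteq> {}" "A \<subseteq> Smons m"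
  shows "\<exists>x\<in>A. \<forall>y\<in>A. y \<noteq> x \<longrightarrow> lex_less m y x"
  using assms
proof (induction A rule: finite_ne_induct)
  case (singleton x) then show ?case by simp
next
  case (insert x F)
  obtain z where z: "z \<in> F" "\<forall>y\<in>F. y \<noteq> z \<longrightarrow> lex_less m y z" using insert by auto
  have "x \<noteq> z" using insert.hyps(3) z(1) by blast
  then have "lex_less m x z \<or> lex_less m z x" using insert.prems z(1) by (intro lex_less_total) auto
  then show ?case
  proof
    assume "lex_less m x z"
    then show ?case using z by auto
  next
    assume zx: "lex_less m z x"
    have "\<forall>y\<in>insert x F. y \<noteq> x \<longrightarrow> lex_less m y x"
      using z(2) zx lex_less_trans[of m _ z x] by auto
    then show ?case by blast
  qed
qed

lemma Sring_iff_keys: "p \<in> Sring m \<longleftrightarrow> keys p \<subseteq> Smons m"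
  by (auto simp: polys_in_def Smons_def)

lemma lead_mon_max:
  assumes "p \<in> Sring m" "p \<noteq> 0"
  shows "lead_mon m p \<in> keys p" "\<And>\<beta>. \<beta> \<in> keys p \<Longrightarrow> \<beta> \<noteq> lead_mon m p \<Longrightarrow> lex_less m \<beta> (lead_mon m p)"
proof -
  have "\<exists>x\<in>keys p. \<forall>y\<in>keys p. y \<noteq> x \<longrightarrow> lex_less m y x"
    using assms by (intro lex_max_exists) (auto simp: Sring_iff_keys)
  then have "\<exists>!x. x \<in> keys p \<and> (\<forall>y\<in>keys p. y \<noteq> x \<longrightarrow> lex_less m y x)"
    using lex_less_asym by metis
  from theI'[OF this] show "lead_mon m p \<in> keys p"
    "\<And>\<beta>. \<beta> \<in> keys p \<Longrightarrow> \<beta> \<noteq> lead_mon m p \<Longrightarrow> lex_less m \<beta> (lead_mon m p)"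
    unfolding lead_mon_def by blast+
qed

lemma lookup_binom:
  assumes "p \<noteq> q"
  shows "lookup (monom p 1 - monom q (1::'k::comm_ring_1)) x = (if x = p then 1 else if x = q then -1 else 0)"
  using assms by (auto simp: monom_def lookup_minus lookup_single when_def)

lemma keys_binom:
  assumes "p \<noteq> q"
  shows "keys (monom p 1 - monom q (1::'k::comm_ring_1)) = {p, q}"
proof (rule set_eqI)
  fix x
  show "x \<in> keys (monom p 1 - monom q (1::'k)) \<longleftrightarrow> x \<in> {p, q}"
    unfolding in_keys_iff lookup_binom[OF assms] by (cases "x = p"; cases "x = q") simp_all
qed

lemma binom_neq_zero:
  assumes "p \<noteq> q"
  shows "monom p 1 - monom q (1::'k::comm_ring_1) \<noteq> 0"
  using keys_binom[OF assms, where 'k='k] by auto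

lemma binom_in_Sring:
  assumes "p \<in> Smons m" "q \<in> Smons m"
  shows "monom p 1 - monom q (1::'k::comm_ring_1) \<in> Sring m"
  using assms by (cases "p = q") (simp_all add: polys_in_def Sring_iff_keys keys_binom Smons_def)

lemma lead_mon_binom:
  assumes "lex_less m q p"
  shows "lead_mon m (monom p 1 - monom q (1::'k::comm_ring_1)) = p"
proof -
  have pq: "p \<noteq> q" using assms lex_less_irrefl by blast
  show ?thesis unfolding lead_mon_def
    by (rule the_equality) (use pq assms lex_less_asym in \<open>auto simp: keys_binom[OF pq]\<close>)
qed

lemma mon_map_binom:
  assumes "p \<noteq> q" "\<phi> p = \<phi> q"
  shows "mon_map \<phi> (monom p 1 - monom q (1::'k::comm_ring_1)) = 0"
proof -
  have "mon_map \<phi> (monom p 1 - monom q (1::'k)) =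
        (\<Sum>\<alpha>\<in>{p, q}. monom (\<phi> \<alpha>) (lookup (monom p 1 - monom q (1::'k)) \<alpha>))"
    unfolding mon_map_def keys_binom[OF assms(1)] ..
  also have "\<dots> = monom (\<phi> p) 1 + monom (\<phi> q) (-1)"
    using assms(1) by (simp add: lookup_binom[OF assms(1)])
  also have "\<dots> = 0" unfolding monom_def assms(2) single_add[symmetric] by simp
  finally show ?thesis .
qed

lemma polys_in_zero: "0 \<in> polys_in V"
  by (simp add: polys_in_def)

lemma polys_in_one: "1 \<in> polys_in V"
  by (simp add: polys_in_def)

lemma polys_in_monom: "keys \<alpha> \<subseteq> V \<Longrightarrow> monom \<alpha> c \<in> polys_in V"
  by (simp add: polys_in_def monom_def)

lemma polys_in_add: "p \<in> polys_in V \<Longrightarrow> q \<in> polys_in V \<Longrightarrow> p + q \<in> polys_in V"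
  unfolding polys_in_def using keys_add[of p q] by blast

lemma polys_in_mult: "p \<in> polys_in V \<Longrightarrow> q \<in> polys_in V \<Longrightarrow> p * q \<in> polys_in V"
proof -
  assume p: "p \<in> polys_in V" and q: "q \<in> polys_in V"
  have "keys \<alpha> \<subseteq> V" if \<alpha>: "\<alpha> \<in> keys (p * q)" for \<alpha>
  proof -
    obtain x y where xy: "\<alpha> = x + y" "x \<in> keys p" "y \<in> keys q"
      using subsetD[OF keys_mult \<alpha>] by blast
    then show ?thesis using p q unfolding polys_in_def xy(1) keys_add_mon by blast
  qed
  then show ?thesis unfolding polys_in_def by blast
qed

lemma polys_in_sum: "finite F \<Longrightarrow> (\<And>x. x \<in> F \<Longrightarrow> f x \<in> polys_in V) \<Longrightarrow> sum f F \<in> polys_in V"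
  by (induction F rule: finite_induct) (auto intro: polys_in_add polys_in_zero)

lemma ideal_gen_zero: "0 \<in> ideal_gen A G"
  unfolding ideal_gen_def by (rule CollectI, rule exI[of _ "{}"], rule exI[of _ "\<lambda>_. 0"]) simp

lemma ideal_gen_mult_gen:
  assumes "g \<in> G" "c \<in> A" shows "c * g \<in> ideal_gen A G"
  unfolding ideal_gen_def
  by (rule CollectI, rule exI[of _ "{g}"], rule exI[of _ "\<lambda>_. c"]) (use assms in auto)

lemma ideal_gen_add:
  assumes A0: "0 \<in> A" and A_add: "\<And>x y. x \<in> A \<Longrightarrow> y \<in> A \<Longrightarrow> x + y \<in> A"
    and x: "x \<in> ideal_gen A G" and y: "y \<in> ideal_gen A G"
  shows "x + y \<in> ideal_gen A G"
proof -
  obtain F1 c1 where F1: "finite F1" "F1 \<subseteq> G" "\<forall>g\<in>F1. c1 g \<in> A" "x = (\<Sum>g\<in>F1. c1 g * g)"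
    using x unfolding ideal_gen_def by blast
  obtain F2 c2 where F2: "finite F2" "F2 \<subseteq> G" "\<forall>g\<in>F2. c2 g \<in> A" "y = (\<Sum>g\<in>F2. c2 g * g)"
    using y unfolding ideal_gen_def by blast
  define c where "c g = (if g \<in> F1 then c1 g else 0) + (if g \<in> F2 then c2 g else 0)" for g
  have fin: "finite (F1 \<union> F2)" using F1(1) F2(1) by simp
  have "(\<Sum>g\<in>F1 \<union> F2. (if g \<in> F1 then c1 g * g else 0)) = x"
    using sum.inter_restrict[OF fin, of "\<lambda>g. c1 g * g" F1] F1(4) by (simp add: Int_absorb2)
  moreover have "(\<Sum>g\<in>F1 \<union> F2. (if g \<in> F2 then c2 g * g else 0)) = y"
    using sum.inter_restrict[OF fin, of "\<lambda>g. c2 g * g" F2] F2(4) by (simp add: Int_absorb2)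
  moreover have "c g * g = (if g \<in> F1 then c1 g * g else 0) + (if g \<in> F2 then c2 g * g else 0)" for g
    unfolding c_def by (simp add: distrib_right)
  ultimately have "x + y = (\<Sum>g\<in>F1 \<union> F2. c g * g)"
    by (simp only: sum.distrib)
  moreover have "\<forall>g\<in>F1 \<union> F2. c g \<in> A"
    unfolding c_def using F1(3) F2(3) A0 by (simp add: A_add)
  ultimately show ?thesis unfolding ideal_gen_def using fin F1(2) F2(2)
    by (intro CollectI exI[of _ "F1 \<union> F2"] exI[of _ c]) simp
qed

lemma ideal_gen_mult_left:
  assumes A_mult: "\<And>x y. x \<in> A \<Longrightarrow> y \<in> A \<Longrightarrow> x * y \<in> A"
    and r: "r \<in> A" and x: "x \<in> ideal_gen A G"
  shows "r * x \<in> ideal_gen A G"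
proof -
  obtain F c where F: "finite F" "F \<subseteq> G" "\<forall>g\<in>F. c g \<in> A" "x = (\<Sum>g\<in>F. c g * g)"
    using x unfolding ideal_gen_def by blast
  have "r * x = (\<Sum>g\<in>F. (r * c g) * g)" unfolding F(4) sum_distrib_left by (simp add: mult.assoc)
  moreover have "\<forall>g\<in>F. r * c g \<in> A" using F(3) r A_mult by blast
  ultimately show ?thesis unfolding ideal_gen_def using F(1,2) by (intro CollectI exI[of _ F] exI[of _ "\<lambda>g. r * c g"]) simp
qed

lemma ideal_gen_sum:
  assumes "0 \<in> A" and "\<And>x y. x \<in> A \<Longrightarrow> y \<in> A \<Longrightarrow> x + y \<in> A"
  shows "finite F \<Longrightarrow> (\<And>i. i \<in> F \<Longrightarrow> f i \<in> ideal_gen A G) \<Longrightarrow> sum f F \<in> ideal_gen A G"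
  by (induction F rule: finite_induct) (auto intro: ideal_gen_add[OF assms] ideal_gen_zero)

lemma ideal_gen_polys_in_subset:
  assumes "G \<subseteq> polys_in V" shows "ideal_gen (polys_in V) G \<subseteq> polys_in V"
proof
  fix x assume "x \<in> ideal_gen (polys_in V) G"
  then obtain F c where F: "finite F" "F \<subseteq> G" "\<forall>g\<in>F. c g \<in> polys_in V" "x = (\<Sum>g\<in>F. c g * g)"
    unfolding ideal_gen_def by blast
  show "x \<in> polys_in V" unfolding F(4)
    using F(2,3) assms by (intro polys_in_sum[OF F(1)] polys_in_mult) blast+
qed

lemma lookup_mult_single_shift:
  fixes c :: "('a::cancel_comm_monoid_add \<Rightarrow>\<^sub>0 'k::comm_ring_1)"
  shows "lookup (c * Poly_Mapping.single p v) (\<alpha> + p) = lookup c \<alpha> * v"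
proof -
  have "lookup (c * Poly_Mapping.single p v) (\<alpha> + p)
          = (\<Sum>l. lookup c l * (\<Sum>q. (v when p = q) when \<alpha> + p = l + q))"
    by (simp add: lookup_mult lookup_single)
  also have "\<dots> = (\<Sum>l. lookup c l * (v when \<alpha> + p = l + p))"
    by (subst when_commute) simp
  also have "\<dots> = (\<Sum>l. (lookup c l * v when l = \<alpha>))"
    by (simp add: mult_when eq_commute)
  finally show ?thesis by simp
qed

lemma lookup_mult_single_eq_zero:
  fixes c :: "('a::cancel_comm_monoid_add \<Rightarrow>\<^sub>0 'k::comm_ring_1)"
  assumes "\<And>\<alpha>. \<beta> \<noteq> \<alpha> + p"
  shows "lookup (c * Poly_Mapping.single p v) \<beta> = 0"
proof -
  have "lookup (c * Poly_Mapping.single p v) \<beta> = (\<Sum>l. lookup c l * (\<Sum>q. (v when p = q) when \<beta> = l + q))"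
    by (simp add: lookup_mult lookup_single)
  also have "\<dots> = (\<Sum>l. lookup c l * (v when \<beta> = l + p))"
    by (subst when_commute) simp
  finally show ?thesis using assms by simp
qed

lemma keys_monomial_ideal:
  fixes f :: "'k::comm_ring_1 mpoly"
  assumes "f \<in> ideal_gen A {monom p 1 | p. p \<in> P}" and "\<alpha> \<in> keys f"
  shows "\<exists>p\<in>P. mon_dvd p \<alpha>"
proof (rule ccontr)
  assume nex: "\<not> ?thesis"
  obtain F c where F: "finite F" "F \<subseteq> {monom p 1 | p. p \<in> P}" "f = (\<Sum>g\<in>F. c g * g)"
    using assms(1) unfolding ideal_gen_def by blast
  have "lookup (c g * g) \<alpha> = 0" if g: "g \<in> F" for g
  proof -
    obtain p where p: "g = monom p 1" "p \<in> P" using F(2) g by blast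
    have "\<alpha> \<noteq> s + p" for s using nex p(2) mon_dvd_add by blast
    then show ?thesis unfolding p(1) monom_def by (rule lookup_mult_single_eq_zero)
  qed
  then have "lookup f \<alpha> = 0" unfolding F(3) lookup_sum by (intro sum.neutral) blast
  then show False using assms(2) by (simp add: in_keys_iff)
qed

lemma poly_mapping_sum_single:
  fixes f :: "'a \<Rightarrow>\<^sub>0 'b::comm_monoid_add"
  shows "f = (\<Sum>\<alpha>\<in>keys f. Poly_Mapping.single \<alpha> (lookup f \<alpha>))"
proof (rule poly_mapping_eqI)
  fix x
  have "lookup (\<Sum>\<alpha>\<in>keys f. Poly_Mapping.single \<alpha> (lookup f \<alpha>)) x
          = (\<Sum>\<alpha>\<in>keys f. (if \<alpha> = x then lookup f \<alpha> else 0))"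
    by (simp add: lookup_sum lookup_single when_def)
  also have "\<dots> = lookup f x"
    by (simp add: sum.delta' in_keys_iff)
  finally show "lookup f x = lookup (\<Sum>\<alpha>\<in>keys f. Poly_Mapping.single \<alpha> (lookup f \<alpha>)) x" by simp
qed

section \<open>Rewriting monomials and a Groebner criterion\<close>

text \<open>A rule \<open>(p, q)\<close> stands for the binomial \<open>x^p - x^q\<close> with leading monomial \<open>x^p\<close>.\<close>

definition rstep :: "(mon \<times> mon) set \<Rightarrow> mon \<Rightarrow> mon \<Rightarrow> bool" where
  "rstep R w w' \<longleftrightarrow> (\<exists>p q s. (p, q) \<in> R \<and> w = s + p \<and> w' = s + q)"

definition irred :: "(mon \<times> mon) set \<Rightarrow> mon \<Rightarrow> bool" where
  "irred R w \<longleftrightarrow> \<not> (\<exists>p q. (p, q) \<in> R \<and> mon_dvd p w)"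

definition lex_decreasing :: "nat \<Rightarrow> (mon \<times> mon) set \<Rightarrow> bool" where
  "lex_decreasing m R \<longleftrightarrow> (\<forall>p q. (p, q) \<in> R \<longrightarrow> p \<in> Smons m \<and> q \<in> Smons m \<and> lex_less m q p)"

definition loc_confluent :: "nat \<Rightarrow> (mon \<times> mon) set \<Rightarrow> bool" where
  "loc_confluent m R \<longleftrightarrow> (\<forall>w w1 w2. w \<in> Smons m \<longrightarrow> rstep R w w1 \<longrightarrow> rstep R w w2 \<longrightarrow>
      (\<exists>v. (rstep R)\<^sup>*\<^sup>* w1 v \<and> (rstep R)\<^sup>*\<^sup>* w2 v))"

lemma rstepI: "(p, q) \<in> R \<Longrightarrow> rstep R (s + p) (s + q)"
  unfolding rstep_def by blast

lemma rstep_not_irred: "rstep R w w' \<Longrightarrow> \<not> irred R w"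
  unfolding rstep_def irred_def using mon_dvd_add by blast

lemma not_irred_rstep:
  assumes "\<not> irred R w" shows "\<exists>w'. rstep R w w'"
proof -
  obtain p q where pq: "(p, q) \<in> R" "mon_dvd p w" using assms unfolding irred_def by blast
  then have "rstep R ((w - p) + p) ((w - p) + q)" by (intro rstepI)
  then show ?thesis using mon_dvd_diff_add[OF pq(2)] by auto
qed

lemma rstep_lex_less:
  assumes "lex_decreasing m R" "rstep R w w'" shows "lex_less m w' w"
  using assms unfolding rstep_def lex_decreasing_def by (auto intro: lex_less_add_left)

lemma rstep_Smons:
  assumes "lex_decreasing m R" "rstep R w w'" "w \<in> Smons m" shows "w' \<in> Smons m"
  using assms unfolding rstep_def lex_decreasing_def by auto

lemma rsteps_Smons:
  assumes "lex_decreasing m R" "(rstep R)\<^sup>*\<^sup>* w w'" "w \<in> Smons m" shows "w' \<in> Smons m"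
  using assms(2,3) by (induction rule: rtranclp_induct) (auto intro: rstep_Smons[OF assms(1)])

lemma rstep_add_left:
  assumes "rstep R w w'" shows "rstep R (t + w) (t + w')"
proof -
  obtain p q s where pq: "(p, q) \<in> R" "w = s + p" "w' = s + q" using assms unfolding rstep_def by blast
  then have "rstep R ((t + s) + p) ((t + s) + q)" by (intro rstepI)
  then show ?thesis unfolding pq(2,3) by (simp add: add.assoc)
qed

lemma rsteps_add_left:
  assumes "(rstep R)\<^sup>*\<^sup>* w w'" shows "(rstep R)\<^sup>*\<^sup>* (t + w) (t + w')"
  using assms by (induction rule: rtranclp_induct) (auto intro: rtranclp.rtrancl_into_rtrancl rstep_add_left)

lemma rsteps_lex_le:
  assumes "lex_decreasing m R" "(rstep R)\<^sup>*\<^sup>* w w'" shows "w' = w \<or> lex_less m w' w"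
  using assms(2)
proof (induction rule: rtranclp_induct)
  case (step y z)
  then show ?case using rstep_lex_less[OF assms(1) step(2)] lex_less_trans by blast
qed simp

lemma rsteps_from_irred:
  assumes "irred R v" "(rstep R)\<^sup>*\<^sup>* v v'" shows "v' = v"
  using assms(2) by (cases rule: converse_rtranclpE) (use assms(1) rstep_not_irred in auto)

lemma normal_form_exists:
  assumes "lex_decreasing m R" "w \<in> Smons m"
  shows "\<exists>v. (rstep R)\<^sup>*\<^sup>* w v \<and> irred R v"
  using assms(2)
proof (induction w rule: wf_induct[OF wf_lex_less[of m]])
  case (1 w)
  show ?case
  proof (cases "irred R w")
    case False
    then obtain w' where st: "rstep R w w'" using not_irred_rstep by blast
    have "w' \<in> Smons m" using rstep_Smons[OF assms(1) st 1(2)] .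
    moreover have "lex_less m w' w" using rstep_lex_less[OF assms(1) st] .
    ultimately obtain v where "(rstep R)\<^sup>*\<^sup>* w' v" "irred R v" using 1 by blast
    then show ?thesis using st by (meson converse_rtranclp_into_rtranclp)
  qed blast
qed

lemma add_diff_lcm: "(p1::mon) + (p2 - p1) = p2 + (p1 - p2)"
  by (intro poly_mapping_eqI) (simp add: lookup_add lookup_minus)

lemma overlap_through_lcm:
  fixes t1 p1 t2 p2 q :: mon
  assumes "t1 + p1 = t2 + p2"
  shows "t1 + q = (t1 + p1 - (p1 + (p2 - p1))) + ((p2 - p1) + q)"
proof (rule poly_mapping_eqI)
  fix v
  have "lookup t1 v + lookup p1 v = lookup t2 v + lookup p2 v"
    using arg_cong[OF assms, of "\<lambda>u. lookup u v"] by (simp add: lookup_add)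
  then show "lookup (t1 + q) v = lookup (t1 + p1 - (p1 + (p2 - p1)) + (p2 - p1 + q)) v"
    unfolding lookup_add lookup_minus by linarith
qed

text \<open>Newman's lemma for the well-founded order \<open>lex_less\<close>.\<close>

lemma normal_form_unique:
  assumes dec: "lex_decreasing m R" and lc: "loc_confluent m R"
  shows "w \<in> Smons m \<Longrightarrow> (rstep R)\<^sup>*\<^sup>* w v1 \<Longrightarrow> (rstep R)\<^sup>*\<^sup>* w v2 \<Longrightarrow> irred R v1 \<Longrightarrow> irred R v2
           \<Longrightarrow> v1 = v2"
proof (induction w arbitrary: v1 v2 rule: wf_induct[OF wf_lex_less[of m]])
  case (1 w)
  show ?case
  proof (cases "irred R w")
    case True
    then show ?thesis using rsteps_from_irred 1(3,4) by metis
  next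
    case False
    have first_step: "\<exists>w'. rstep R w w' \<and> (rstep R)\<^sup>*\<^sup>* w' v" if "(rstep R)\<^sup>*\<^sup>* w v" "irred R v" for v
      using that False by (cases rule: converse_rtranclpE) auto
    obtain w1 where a1: "rstep R w w1" "(rstep R)\<^sup>*\<^sup>* w1 v1" using first_step 1(3,5) by blast
    obtain w2 where a2: "rstep R w w2" "(rstep R)\<^sup>*\<^sup>* w2 v2" using first_step 1(4,6) by blast
    obtain x where x: "(rstep R)\<^sup>*\<^sup>* w1 x" "(rstep R)\<^sup>*\<^sup>* w2 x"
      using lc 1(2) a1(1) a2(1) unfolding loc_confluent_def by blast
    have D1: "w1 \<in> Smons m" and D2: "w2 \<in> Smons m" using rstep_Smons[OF dec] a1(1) a2(1) 1(2) by blast+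
    obtain n where n: "(rstep R)\<^sup>*\<^sup>* x n" "irred R n"
      using normal_form_exists[OF dec rsteps_Smons[OF dec x(1) D1]] by blast
    have "(w1, w) \<in> {(\<alpha>, \<beta>). \<alpha> \<in> Smons m \<and> \<beta> \<in> Smons m \<and> lex_less m \<alpha> \<beta>}"
      using D1 1(2) rstep_lex_less[OF dec a1(1)] by blast
    then have "v1 = n" using 1(1) D1 a1(2) rtranclp_trans[OF x(1) n(1)] 1(5) n(2) by blast
    moreover have "(w2, w) \<in> {(\<alpha>, \<beta>). \<alpha> \<in> Smons m \<and> \<beta> \<in> Smons m \<and> lex_less m \<alpha> \<beta>}"
      using D2 1(2) rstep_lex_less[OF dec a2(1)] by blast
    then have "v2 = n" using 1(1) D2 a2(2) rtranclp_trans[OF x(2) n(1)] 1(6) n(2) by blast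
    ultimately show ?thesis by simp
  qed
qed

definition coeff_sum :: "mon set \<Rightarrow> ('k::comm_ring_1) mpoly \<Rightarrow> 'k" where
  "coeff_sum K f = (\<Sum>\<alpha>\<in>keys f. if \<alpha> \<in> K then lookup f \<alpha> else 0)"

lemma coeff_sum_superset:
  assumes "finite B" "keys f \<subseteq> B"
  shows "coeff_sum K f = (\<Sum>\<alpha>\<in>B. if \<alpha> \<in> K then lookup f \<alpha> else 0)"
  unfolding coeff_sum_def by (rule sum.mono_neutral_left[OF assms]) (simp add: in_keys_iff)

lemma coeff_sum_add: "coeff_sum K (f + g) = coeff_sum K f + coeff_sum K g"
proof -
  let ?B = "keys f \<union> keys g"
  have fin: "finite ?B" by simp
  have "coeff_sum K (f + g) = (\<Sum>\<alpha>\<in>?B. if \<alpha> \<in> K then lookup (f + g) \<alpha> else 0)"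
    using coeff_sum_superset[OF fin keys_add] .
  also have "\<dots> = (\<Sum>\<alpha>\<in>?B. (if \<alpha> \<in> K then lookup f \<alpha> else 0) + (if \<alpha> \<in> K then lookup g \<alpha> else 0))"
    by (intro sum.cong) (simp_all add: lookup_add)
  also have "\<dots> = coeff_sum K f + coeff_sum K g"
    unfolding sum.distrib using coeff_sum_superset[OF fin, of f K] coeff_sum_superset[OF fin, of g K] by simp
  finally show ?thesis .
qed

lemma coeff_sum_diff: "coeff_sum K (f - g) = coeff_sum K f - coeff_sum K g"
proof -
  have "coeff_sum K (- g) = - coeff_sum K g"
    unfolding coeff_sum_def by (simp add: keys_minus sum_negf[symmetric] if_distrib[of uminus] cong: if_cong)
  then show ?thesis using coeff_sum_add[of K f "- g"] by simp
qed

lemma coeff_sum_sum: "finite F \<Longrightarrow> coeff_sum K (\<Sum>i\<in>F. h i) = (\<Sum>i\<in>F. coeff_sum K (h i))"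
  by (induction F rule: finite_induct) (simp add: coeff_sum_def, simp add: coeff_sum_add)

lemma coeff_sum_mult_single:
  fixes c :: "('k::comm_ring_1) mpoly"
  shows "coeff_sum K (c * Poly_Mapping.single p 1) = (\<Sum>\<alpha>\<in>keys c. if \<alpha> + p \<in> K then lookup c \<alpha> else 0)"
proof -
  let ?B = "(\<lambda>\<alpha>. \<alpha> + p) ` keys c"
  have "keys (c * Poly_Mapping.single p 1) \<subseteq> ?B"
    using keys_mult[of c "Poly_Mapping.single p (1::'k)"] by auto
  then have "coeff_sum K (c * Poly_Mapping.single p 1)
               = (\<Sum>\<beta>\<in>?B. if \<beta> \<in> K then lookup (c * Poly_Mapping.single p 1) \<beta> else 0)"
    by (intro coeff_sum_superset) simp_all
  also have "\<dots> = (\<Sum>\<alpha>\<in>keys c. if \<alpha> + p \<in> K then lookup (c * Poly_Mapping.single p 1) (\<alpha> + p) else 0)"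
    by (simp add: sum.reindex inj_on_def)
  also have "\<dots> = (\<Sum>\<alpha>\<in>keys c. if \<alpha> + p \<in> K then lookup c \<alpha> else 0)"
  proof (rule sum.cong[OF refl])
    fix \<alpha>
    show "(if \<alpha> + p \<in> K then lookup (c * Poly_Mapping.single p 1) (\<alpha> + p) else 0)
            = (if \<alpha> + p \<in> K then lookup c \<alpha> else 0)"
      using lookup_mult_single_shift[of c p "1::'k" \<alpha>] by simp
  qed
  finally show ?thesis .
qed

lemma coeff_sum_mult_binom:
  fixes c :: "('k::comm_ring_1) mpoly"
  assumes "\<And>\<alpha>. \<alpha> \<in> keys c \<Longrightarrow> \<alpha> + p \<in> K \<longleftrightarrow> \<alpha> + q \<in> K"
  shows "coeff_sum K (c * (monom p 1 - monom q 1)) = 0"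
  unfolding monom_def right_diff_distrib coeff_sum_diff coeff_sum_mult_single
  using assms by (simp cong: sum.cong)

lemma rsteps_to_irred_iff:
  assumes dec: "lex_decreasing m R" and lc: "loc_confluent m R"
    and pq: "(p, q) \<in> R" and \<alpha>: "\<alpha> \<in> Smons m" and u: "irred R u"
  shows "(rstep R)\<^sup>*\<^sup>* (\<alpha> + p) u \<longleftrightarrow> (rstep R)\<^sup>*\<^sup>* (\<alpha> + q) u"
proof
  have st: "rstep R (\<alpha> + p) (\<alpha> + q)" using rstepI[OF pq] .
  have ap: "\<alpha> + p \<in> Smons m" and aq: "\<alpha> + q \<in> Smons m"
    using dec pq \<alpha> unfolding lex_decreasing_def by simp_all
  assume to_u: "(rstep R)\<^sup>*\<^sup>* (\<alpha> + p) u"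
  obtain n where n: "(rstep R)\<^sup>*\<^sup>* (\<alpha> + q) n" "irred R n" using normal_form_exists[OF dec aq] by blast
  have "n = u"
    using normal_form_unique[OF dec lc ap converse_rtranclp_into_rtranclp[of "rstep R", OF st n(1)] to_u n(2) u] .
  then show "(rstep R)\<^sup>*\<^sup>* (\<alpha> + q) u" using n(1) by simp
next
  assume "(rstep R)\<^sup>*\<^sup>* (\<alpha> + q) u"
  then show "(rstep R)\<^sup>*\<^sup>* (\<alpha> + p) u" using rstepI[OF pq] by (rule converse_rtranclp_into_rtranclp[rotated])
qed

text \<open>Were the leading monomial \<open>u\<close> irreducible, let \<open>K\<close> be the set of monomials with normal form
  \<open>u\<close>: every multiple of a generating binomial has coefficient sum zero over \<open>K\<close>, whereas \<open>u\<close> is the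
  only monomial of \<open>K\<close> occurring in \<open>f\<close>.\<close>

theorem lead_mon_reducible:
  fixes f :: "('k::comm_ring_1) mpoly"
  assumes dec: "lex_decreasing m R" and lc: "loc_confluent m R"
    and G: "\<And>g. g \<in> G \<Longrightarrow> \<exists>p q. (p, q) \<in> R \<and> g = monom p 1 - monom q 1"
    and f: "f \<in> ideal_gen (Sring m) G" "f \<in> Sring m" "f \<noteq> 0"
  shows "\<not> irred R (lead_mon m f)"
proof
  let ?u = "lead_mon m f"
  assume irr_u: "irred R ?u"
  note lead = lead_mon_max[OF f(2,3)]
  define K where "K = {w. (rstep R)\<^sup>*\<^sup>* w ?u}"
  obtain F c where F: "finite F" "F \<subseteq> G" "\<forall>x\<in>F. c x \<in> Sring m" "f = (\<Sum>x\<in>F. c x * x)"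
    using f(1) unfolding ideal_gen_def by blast
  have "coeff_sum K (c x * x) = 0" if x: "x \<in> F" for x
  proof -
    obtain p q where pq: "(p, q) \<in> R" "x = monom p 1 - monom q 1" using G F(2) x by blast
    have "keys (c x) \<subseteq> Smons m" using F(3) x Sring_iff_keys by blast
    then show ?thesis unfolding pq(2) K_def mem_Collect_eq
      using rsteps_to_irred_iff[OF dec lc pq(1) _ irr_u] by (intro coeff_sum_mult_binom) blast
  qed
  then have sum0: "coeff_sum K f = 0" unfolding F(4) coeff_sum_sum[OF F(1)] by simp
  have "\<alpha> \<notin> K" if "\<alpha> \<in> keys f" "\<alpha> \<noteq> ?u" for \<alpha>
  proof
    assume "\<alpha> \<in> K"
    then have "?u = \<alpha> \<or> lex_less m ?u \<alpha>" unfolding K_def using rsteps_lex_le[OF dec] by blast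
    then show False using lead(2)[OF that] that(2) lex_less_asym by blast
  qed
  moreover have "?u \<in> K" unfolding K_def by blast
  ultimately have "coeff_sum K f = (\<Sum>\<alpha>\<in>keys f. if \<alpha> = ?u then lookup f \<alpha> else 0)"
    unfolding coeff_sum_def by (intro sum.cong refl) auto
  also have "\<dots> = lookup f ?u" using lead(1) by (simp add: sum.delta)
  finally show False using sum0 lead(1) by (simp add: in_keys_iff)
qed

section \<open>The Rees map and the generators as rewrite rules\<close>

lemma lookup_mgcd: "lookup (mgcd f g) v = min (lookup f v) (lookup g v)"
  by (simp add: mgcd.rep_eq)

lemma lookup_sum_single_T:
  "lookup (\<Sum>l\<in>{1..m}. Poly_Mapping.single (T l) (h l)) v
     = (case v of T i \<Rightarrow> (if i \<in> {1..m} then h i else 0) | _ \<Rightarrow> 0)"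
  by (cases v) (simp_all add: lookup_sum lookup_single when_def sum.delta)

lemma lookup_sum_single_X:
  "lookup (\<Sum>l\<in>{1..m}. Poly_Mapping.single (X l) (h l)) v
     = (case v of X i \<Rightarrow> (if i \<in> {1..m} then h i else 0) | _ \<Rightarrow> 0)"
  by (cases v) (simp_all add: lookup_sum lookup_single when_def sum.delta)

lemma lookup_psi_exp_T:
  "lookup (psi_exp m a b \<alpha>) (T i) =
     (if i \<in> {1..m} then lookup \<alpha> (T i) + lookup \<alpha> (X i) * a i + lookup \<alpha> Wv * b i else 0)"
  unfolding psi_exp_def lookup_sum_single_T by simp

lemma lookup_psi_exp_non_T: "(\<And>i. v \<noteq> T i) \<Longrightarrow> lookup (psi_exp m a b \<alpha>) v = 0"
  unfolding psi_exp_def lookup_sum_single_T by (cases v) auto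

lemma psi_exp_Smons: "psi_exp m a b \<alpha> \<in> Smons m"
proof -
  have "v \<in> Svars m" if "lookup (psi_exp m a b \<alpha>) v \<noteq> 0" for v
    using that by (cases v) (auto simp: lookup_psi_exp_T lookup_psi_exp_non_T Svars_def split: if_splits)
  then show ?thesis unfolding Smons_def by (auto simp: in_keys_iff)
qed

definition z_degree :: "nat \<Rightarrow> mon \<Rightarrow> nat" where
  "z_degree m \<alpha> = lookup \<alpha> Wv + (\<Sum>i\<in>{1..m}. lookup \<alpha> (X i))"

lemma lookup_rees_exp:
  "lookup (rees_exp m a b \<alpha>) v =
     (case v of T i \<Rightarrow> (if i \<in> {1..m} then lookup \<alpha> (T i) + lookup \<alpha> (X i) * a i + lookup \<alpha> Wv * b i else 0)
       | Zv \<Rightarrow> z_degree m \<alpha> | _ \<Rightarrow> 0)"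
  unfolding rees_exp_def lookup_add
  by (cases v) (simp_all add: lookup_psi_exp_T lookup_psi_exp_non_T lookup_single z_degree_def)

lemma rees_exp_add: "rees_exp m a b (\<alpha> + \<beta>) = rees_exp m a b \<alpha> + rees_exp m a b \<beta>"
  by (intro poly_mapping_eqI)
     (simp add: lookup_rees_exp lookup_add z_degree_def sum.distrib algebra_simps split: var.split)

definition Pbin_lhs :: "nat \<Rightarrow> (nat \<Rightarrow> nat) \<Rightarrow> (nat \<Rightarrow> nat) \<Rightarrow> mon \<Rightarrow> mon \<Rightarrow> mon" where
  "Pbin_lhs m a b \<mu> \<nu> = (psi_exp m a b \<nu> - mgcd (psi_exp m a b \<mu>) (psi_exp m a b \<nu>)) + \<mu>"

definition Pbin_rhs :: "nat \<Rightarrow> (nat \<Rightarrow> nat) \<Rightarrow> (nat \<Rightarrow> nat) \<Rightarrow> mon \<Rightarrow> mon \<Rightarrow> mon" where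
  "Pbin_rhs m a b \<mu> \<nu> = (psi_exp m a b \<mu> - mgcd (psi_exp m a b \<mu>) (psi_exp m a b \<nu>)) + \<nu>"

lemma Pbin_eq_binom: "Pbin m a b \<mu> \<nu> = monom (Pbin_lhs m a b \<mu> \<nu>) 1 - monom (Pbin_rhs m a b \<mu> \<nu>) 1"
  unfolding Pbin_def Pbin_lhs_def Pbin_rhs_def Let_def ..

lemma lookup_Pbin_lhs_non_T: "(\<And>i. v \<noteq> T i) \<Longrightarrow> lookup (Pbin_lhs m a b \<mu> \<nu>) v = lookup \<mu> v"
  unfolding Pbin_lhs_def by (simp add: lookup_add lookup_minus lookup_mgcd lookup_psi_exp_non_T)

lemma lookup_Pbin_rhs_non_T: "(\<And>i. v \<noteq> T i) \<Longrightarrow> lookup (Pbin_rhs m a b \<mu> \<nu>) v = lookup \<nu> v"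
  unfolding Pbin_rhs_def by (simp add: lookup_add lookup_minus lookup_mgcd lookup_psi_exp_non_T)

lemma lookup_Pbin_lhs_T: "lookup (Pbin_lhs m a b \<mu> \<nu>) (T i) =
   lookup (psi_exp m a b \<nu>) (T i) - min (lookup (psi_exp m a b \<mu>) (T i)) (lookup (psi_exp m a b \<nu>) (T i))
     + lookup \<mu> (T i)"
  unfolding Pbin_lhs_def by (simp add: lookup_add lookup_minus lookup_mgcd)

lemma lookup_Pbin_rhs_T: "lookup (Pbin_rhs m a b \<mu> \<nu>) (T i) =
   lookup (psi_exp m a b \<mu>) (T i) - min (lookup (psi_exp m a b \<mu>) (T i)) (lookup (psi_exp m a b \<nu>) (T i))
     + lookup \<nu> (T i)"
  unfolding Pbin_rhs_def by (simp add: lookup_add lookup_minus lookup_mgcd)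

lemma Pbin_lhs_rhs_Smons:
  "\<mu> \<in> Smons m \<Longrightarrow> \<nu> \<in> Smons m \<Longrightarrow> Pbin_lhs m a b \<mu> \<nu> \<in> Smons m \<and> Pbin_rhs m a b \<mu> \<nu> \<in> Smons m"
  unfolding Pbin_lhs_def Pbin_rhs_def using psi_exp_Smons Smons_diff by simp

lemma rees_exp_Pbin_lhs_rhs:
  assumes "z_degree m \<mu> = z_degree m \<nu>"
  shows "rees_exp m a b (Pbin_lhs m a b \<mu> \<nu>) = rees_exp m a b (Pbin_rhs m a b \<mu> \<nu>)"
proof (rule poly_mapping_eqI)
  fix v
  have z: "z_degree m (Pbin_lhs m a b \<mu> \<nu>) = z_degree m (Pbin_rhs m a b \<mu> \<nu>)"
    using assms unfolding z_degree_def by (simp add: lookup_Pbin_lhs_non_T lookup_Pbin_rhs_non_T)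
  show "lookup (rees_exp m a b (Pbin_lhs m a b \<mu> \<nu>)) v = lookup (rees_exp m a b (Pbin_rhs m a b \<mu> \<nu>)) v"
    using z by (cases v)
      (simp_all add: lookup_rees_exp lookup_Pbin_lhs_non_T lookup_Pbin_rhs_non_T lookup_Pbin_lhs_T
         lookup_Pbin_rhs_T lookup_psi_exp_T min_def)
qed

lemma lex_less_Pbin_by_W:
  assumes "lookup \<nu> Wv < lookup \<mu> Wv"
  shows "lex_less m (Pbin_rhs m a b \<mu> \<nu>) (Pbin_lhs m a b \<mu> \<nu>)"
  unfolding lex_less_def
  by (rule exI[of _ 0]) (simp add: var_rank_def lookup_Pbin_lhs_non_T lookup_Pbin_rhs_non_T assms)

definition XX_pair :: "nat \<Rightarrow> nat \<Rightarrow> mon \<times> mon" where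
  "XX_pair i j = (Poly_Mapping.single (X i) 1, Poly_Mapping.single (X j) 1)"

definition WX_pair :: "nat \<Rightarrow> mon \<times> mon" where
  "WX_pair l = (Poly_Mapping.single Wv 1, Poly_Mapping.single (X l) 1)"

definition WC_pair :: "nat \<Rightarrow> (nat \<Rightarrow> nat) \<Rightarrow> mon \<times> mon" where
  "WC_pair m c = (Wmon (vabs m c), Xmon m c)"

definition gen_pairs :: "nat \<Rightarrow> (nat \<Rightarrow> nat) set \<Rightarrow> (mon \<times> mon) set" where
  "gen_pairs m C = {XX_pair i j | i j. 1 \<le> j \<and> j < i \<and> i \<le> m} \<union> WX_pair ` {1..m} \<union> WC_pair m ` C"

definition Pbin_rule :: "nat \<Rightarrow> (nat \<Rightarrow> nat) \<Rightarrow> (nat \<Rightarrow> nat) \<Rightarrow> mon \<times> mon \<Rightarrow> mon \<times> mon" where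
  "Pbin_rule m a b pr = (Pbin_lhs m a b (fst pr) (snd pr), Pbin_rhs m a b (fst pr) (snd pr))"

definition gen_binoms :: "nat \<Rightarrow> (nat \<Rightarrow> nat) \<Rightarrow> (nat \<Rightarrow> nat) \<Rightarrow> (nat \<Rightarrow> nat) set \<Rightarrow> ('k::comm_ring_1) mpoly set" where
  "gen_binoms m a b C = (\<lambda>pr. Pbin m a b (fst pr) (snd pr)) ` gen_pairs m C"

lemma gen_binoms_eq:
  "Gamma0 m a b \<union> {Pbin m a b (Wmon (vabs m c)) (Xmon m c) | c. c \<in> C}
     = (gen_binoms m a b C :: ('k::comm_ring_1) mpoly set)"
proof -
  have "(Gamma0 m a b :: 'k mpoly set) = (\<lambda>pr. Pbin m a b (fst pr) (snd pr)) `
          ({XX_pair i j | i j. 1 \<le> j \<and> j < i \<and> i \<le> m} \<union> WX_pair ` {1..m})"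
    (is "_ = ?P ` (?XX \<union> ?WX)")
  proof (intro set_eqI iffI)
    fix g :: "'k mpoly" assume "g \<in> Gamma0 m a b"
    then obtain i j where ij: "g = Pbin m a b (Poly_Mapping.single (Xv m i) 1) (Poly_Mapping.single (Xv m j) 1)"
      "1 \<le> j" "j < i" "i \<le> m + 1" unfolding Gamma0_def by blast
    show "g \<in> ?P ` (?XX \<union> ?WX)"
    proof (cases "i = m + 1")
      case True
      then have "g = ?P (WX_pair j)" "WX_pair j \<in> ?WX" using ij by (auto simp: WX_pair_def Xv_def)
      then show ?thesis by blast
    next
      case False
      have "XX_pair i j \<in> ?XX" using ij False by (intro CollectI exI[of _ i] exI[of _ j]) simp
      moreover have "g = ?P (XX_pair i j)" using ij False by (simp add: XX_pair_def Xv_def)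
      ultimately show ?thesis by blast
    qed
  next
    fix g :: "'k mpoly" assume "g \<in> ?P ` (?XX \<union> ?WX)"
    then consider i j where "g = ?P (XX_pair i j)" "1 \<le> j" "j < i" "i \<le> m"
      | l where "g = ?P (WX_pair l)" "l \<in> {1..m}" by blast
    then show "g \<in> Gamma0 m a b"
    proof cases
      case 1
      then have "g = Pbin m a b (Poly_Mapping.single (Xv m i) 1) (Poly_Mapping.single (Xv m j) 1)"
        by (simp add: XX_pair_def Xv_def)
      then show ?thesis unfolding Gamma0_def using 1(2-4) by force
    next
      case 2
      then have "g = Pbin m a b (Poly_Mapping.single (Xv m (m + 1)) 1) (Poly_Mapping.single (Xv m l) 1)"
        by (simp add: WX_pair_def Xv_def)
      then show ?thesis unfolding Gamma0_def using 2(2) by force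
    qed
  qed
  moreover have "{Pbin m a b (Wmon (vabs m c)) (Xmon m c) | c. c \<in> C} = (?P ` WC_pair m ` C :: 'k mpoly set)"
    unfolding image_image WC_pair_def by auto
  ultimately show ?thesis unfolding gen_binoms_def gen_pairs_def by (simp only: image_Un)
qed

definition admissible :: "nat \<Rightarrow> (nat \<Rightarrow> nat) \<Rightarrow> (nat \<Rightarrow> nat) \<Rightarrow> mon \<times> mon \<Rightarrow> bool" where
  "admissible m a b r \<longleftrightarrow> fst r \<in> Smons m \<and> snd r \<in> Smons m \<and> lex_less m (snd r) (fst r) \<and>
     rees_exp m a b (fst r) = rees_exp m a b (snd r) \<and> lookup (snd r) Wv = 0"

definition WX_lead :: "(nat \<Rightarrow> nat) \<Rightarrow> (nat \<Rightarrow> nat) \<Rightarrow> nat \<Rightarrow> mon" where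
  "WX_lead a b l = Poly_Mapping.single Wv 1 + Poly_Mapping.single (T l) (a l - b l)"

lemma lookup_WX_lead: "lookup (WX_lead a b l) v = (if v = Wv then 1 else if v = T l then a l - b l else 0)"
  by (simp add: WX_lead_def lookup_add lookup_single when_def)

lemma mon_dvd_WX_lead:
  assumes "1 \<le> lookup y Wv" "a i - b i \<le> lookup y (T i)"
  shows "mon_dvd (WX_lead a b i) y"
  unfolding mon_dvd_def lookup_WX_lead using assms by simp

lemma lookup_single_var: "lookup (Poly_Mapping.single x (k::nat)) v = (if v = x then k else 0)"
  by (simp add: lookup_single when_def eq_commute)

lemma lookup_Wmon: "lookup (Wmon k) v = (if v = Wv then k else 0)"
  by (simp add: Wmon_def lookup_single_var)

lemma lookup_Xmon: "lookup (Xmon m c) v = (case v of X i \<Rightarrow> (if i \<in> {1..m} then c i else 0) | _ \<Rightarrow> 0)"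
  unfolding Xmon_def lookup_sum_single_X ..

lemma single_X_Smons: "i \<in> {1..m} \<Longrightarrow> Poly_Mapping.single (X i) k \<in> Smons m"
  by (simp add: Smons_def Svars_def)

lemma single_W_Smons: "Poly_Mapping.single Wv k \<in> Smons m"
  by (simp add: Smons_def Svars_def)

lemma Xmon_Smons: "Xmon m c \<in> Smons m"
proof -
  have "v \<in> Svars m" if "lookup (Xmon m c) v \<noteq> 0" for v
    using that by (cases v) (auto simp: lookup_Xmon Svars_def split: if_splits)
  then show ?thesis unfolding Smons_def by (auto simp: in_keys_iff)
qed

lemma z_degree_single_X: "i \<in> {1..m} \<Longrightarrow> z_degree m (Poly_Mapping.single (X i) k) = k"
  unfolding z_degree_def lookup_single_var by (simp add: sum.delta')

lemma z_degree_single_W: "z_degree m (Poly_Mapping.single Wv k) = k"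
  unfolding z_degree_def lookup_single_var by simp

lemma XX_rule:
  fixes a b :: "nat \<Rightarrow> nat"
  assumes ij: "1 \<le> j" "j < i" "i \<le> m"
  defines "r \<equiv> Pbin_rule m a b (XX_pair i j)"
  shows "admissible m a b r" "lookup (fst r) Wv = 0"
    "a i \<le> lookup (snd r) (T i)" "lookup (fst r) (T j) = a j"
proof -
  let ?xi = "Poly_Mapping.single (X i) (1::nat)" and ?xj = "Poly_Mapping.single (X j) (1::nat)"
  have r: "fst r = Pbin_lhs m a b ?xi ?xj" "snd r = Pbin_rhs m a b ?xi ?xj"
    by (simp_all add: r_def Pbin_rule_def XX_pair_def)
  have W: "lookup (fst r) Wv = 0" "lookup (snd r) Wv = 0"
    unfolding r by (simp_all add: lookup_Pbin_lhs_non_T lookup_Pbin_rhs_non_T lookup_single_var)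
  have X: "lookup (fst r) (X k) = (if k = i then 1 else 0)" "lookup (snd r) (X k) = (if k = j then 1 else 0)" for k
    unfolding r by (simp_all add: lookup_Pbin_lhs_non_T lookup_Pbin_rhs_non_T lookup_single_var)
  have "lex_less m (snd r) (fst r)"
    unfolding lex_less_def
  proof (intro exI[of _ "m + 1 - i"] conjI allI impI)
    fix k assume k: "k < m + 1 - i"
    show "lookup (snd r) (var_rank m k) = lookup (fst r) (var_rank m k)"
    proof (cases "k = 0")
      case False
      then have "var_rank m k = X (m + 1 - k)" "m + 1 - k \<noteq> i" "m + 1 - k \<noteq> j"
        using k ij by (auto simp: var_rank_def)
      then show ?thesis by (simp add: X)
    qed (simp add: var_rank_def W)
  next
    have "var_rank m (m + 1 - i) = X i" using ij by (simp add: var_rank_def)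
    then show "lookup (snd r) (var_rank m (m + 1 - i)) < lookup (fst r) (var_rank m (m + 1 - i))"
      using ij by (simp add: X)
  qed
  moreover have "rees_exp m a b (fst r) = rees_exp m a b (snd r)"
    unfolding r using ij by (intro rees_exp_Pbin_lhs_rhs) (simp add: z_degree_single_X)
  moreover have "fst r \<in> Smons m" "snd r \<in> Smons m"
    unfolding r using ij by (simp_all add: Pbin_lhs_rhs_Smons single_X_Smons)
  ultimately show "admissible m a b r" unfolding admissible_def using W by blast
  show "lookup (fst r) Wv = 0" by (fact W)
  show "a i \<le> lookup (snd r) (T i)" "lookup (fst r) (T j) = a j"
    unfolding r using ij by (simp_all add: lookup_Pbin_lhs_T lookup_Pbin_rhs_T lookup_psi_exp_T lookup_single_var)
qed

lemma WX_rule: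
  fixes a b :: "nat \<Rightarrow> nat"
  assumes l: "l \<in> {1..m}" and ab: "b l < a l"
  defines "r \<equiv> Pbin_rule m a b (WX_pair l)"
  shows "admissible m a b r" "fst r = WX_lead a b l"
proof -
  let ?w = "Poly_Mapping.single Wv (1::nat)" and ?xl = "Poly_Mapping.single (X l) (1::nat)"
  have r: "fst r = Pbin_lhs m a b ?w ?xl" "snd r = Pbin_rhs m a b ?w ?xl"
    by (simp_all add: r_def Pbin_rule_def WX_pair_def)
  show lead: "fst r = WX_lead a b l"
  proof (rule poly_mapping_eqI)
    fix v
    show "lookup (fst r) v = lookup (WX_lead a b l) v"
      unfolding r lookup_WX_lead using l ab
      by (cases v) (auto simp: lookup_Pbin_lhs_T lookup_Pbin_lhs_non_T lookup_psi_exp_T lookup_single_var)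
  qed
  have "lex_less m (snd r) (fst r)"
    unfolding r by (rule lex_less_Pbin_by_W) (simp add: lookup_single_var)
  moreover have "rees_exp m a b (fst r) = rees_exp m a b (snd r)"
    unfolding r using l by (intro rees_exp_Pbin_lhs_rhs) (simp add: z_degree_single_X z_degree_single_W)
  moreover have "fst r \<in> Smons m" "snd r \<in> Smons m"
    unfolding r using l by (simp_all add: Pbin_lhs_rhs_Smons single_X_Smons single_W_Smons)
  moreover have "lookup (snd r) Wv = 0"
    unfolding r by (simp add: lookup_Pbin_rhs_non_T lookup_single_var)
  ultimately show "admissible m a b r" unfolding admissible_def by blast
qed

lemma WC_rule:
  fixes a b :: "nat \<Rightarrow> nat"
  assumes c: "1 \<le> vabs m c"
  defines "r \<equiv> Pbin_rule m a b (WC_pair m c)"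
  shows "admissible m a b r" "lookup (fst r) Wv = vabs m c" "lookup (fst r) (X k) = 0"
proof -
  have r: "fst r = Pbin_lhs m a b (Wmon (vabs m c)) (Xmon m c)" "snd r = Pbin_rhs m a b (Wmon (vabs m c)) (Xmon m c)"
    by (simp_all add: r_def Pbin_rule_def WC_pair_def)
  show "lookup (fst r) Wv = vabs m c" "lookup (fst r) (X k) = 0"
    unfolding r by (simp_all add: lookup_Pbin_lhs_non_T lookup_Wmon)
  have "lex_less m (snd r) (fst r)"
    unfolding r using c by (intro lex_less_Pbin_by_W) (simp add: lookup_Wmon lookup_Xmon)
  moreover have "rees_exp m a b (fst r) = rees_exp m a b (snd r)"
    unfolding r by (intro rees_exp_Pbin_lhs_rhs) (simp add: z_degree_def lookup_Wmon lookup_Xmon vabs_def)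
  moreover have "fst r \<in> Smons m" "snd r \<in> Smons m"
    unfolding r by (simp_all add: Pbin_lhs_rhs_Smons Xmon_Smons Wmon_def single_W_Smons)
  moreover have "lookup (snd r) Wv = 0"
    unfolding r by (simp add: lookup_Pbin_rhs_non_T lookup_Xmon)
  ultimately show "admissible m a b r" unfolding admissible_def by blast
qed

lemma admissible_gen_pairs:
  assumes ab: "\<forall>i\<in>{1..m}. b i < a i" and C: "\<forall>c\<in>C. 1 \<le> vabs m c" and pr: "pr \<in> gen_pairs m C"
  shows "admissible m a b (Pbin_rule m a b pr)"
  using pr XX_rule(1) WX_rule(1) WC_rule(1) ab C unfolding gen_pairs_def by fastforce

lemma Pbin_pair_binom:
  fixes a b :: "nat \<Rightarrow> nat"
  assumes "admissible m a b (Pbin_rule m a b pr)"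
  defines "r \<equiv> Pbin_rule m a b pr"
  shows "Pbin m a b (fst pr) (snd pr) = monom (fst r) 1 - monom (snd r) (1::'k::comm_ring_1)"
    and "lead_mon m (Pbin m a b (fst pr) (snd pr) :: 'k mpoly) = fst r"
    and "Pbin m a b (fst pr) (snd pr) \<noteq> (0 :: 'k mpoly)"
    and "Pbin m a b (fst pr) (snd pr) \<in> (Sring m :: 'k mpoly set)"
proof -
  show eq: "Pbin m a b (fst pr) (snd pr) = monom (fst r) 1 - monom (snd r) (1::'k)"
    unfolding r_def Pbin_rule_def Pbin_eq_binom by simp
  have r: "fst r \<in> Smons m" "snd r \<in> Smons m" "lex_less m (snd r) (fst r)"
    using assms(1) unfolding r_def admissible_def by blast+
  show "lead_mon m (Pbin m a b (fst pr) (snd pr) :: 'k mpoly) = fst r"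
    unfolding eq using lead_mon_binom[OF r(3)] .
  show "Pbin m a b (fst pr) (snd pr) \<noteq> (0 :: 'k mpoly)"
    unfolding eq using r(3) lex_less_irrefl by (metis binom_neq_zero)
  show "Pbin m a b (fst pr) (snd pr) \<in> (Sring m :: 'k mpoly set)"
    unfolding eq using binom_in_Sring[OF r(1,2)] .
qed

section \<open>Normal forms and the truncation in W-degree\<close>

lemma rsteps_W_le:
  assumes "\<And>p q. (p, q) \<in> R \<Longrightarrow> lookup q Wv = 0" and "(rstep R)\<^sup>*\<^sup>* w w'"
  shows "lookup w' Wv \<le> lookup w Wv"
  using assms(2)
proof (induction rule: rtranclp_induct)
  case (step y z)
  then obtain p q s where "(p, q) \<in> R" "y = s + p" "z = s + q" unfolding rstep_def by blast
  then show ?case using assms(1) step.IH by (simp add: lookup_add)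
qed simp

lemma rsteps_rees_exp:
  assumes "\<And>p q. (p, q) \<in> R \<Longrightarrow> rees_exp m a b p = rees_exp m a b q" and "(rstep R)\<^sup>*\<^sup>* w w'"
  shows "rees_exp m a b w' = rees_exp m a b w"
  using assms(2)
proof (induction rule: rtranclp_induct)
  case (step y z)
  then obtain p q s where "(p, q) \<in> R" "y = s + p" "z = s + q" unfolding rstep_def by blast
  then show ?case using assms(1) step.IH by (simp add: rees_exp_add)
qed simp

text \<open>The binomial of two distinct monomials with the same Rees image lies in \<open>L\<close>, so its leading
  monomial lies in \<open>in(L)\<close> and is divisible by a leading monomial of the Groebner basis.\<close>

lemma reducible_in_rees_fibre:
  assumes GB: "groebner_basis m G (Lideal m a b :: ('k::comm_ring_1) mpoly set)"
    and leads: "\<And>g. g \<in> G \<Longrightarrow> g \<noteq> 0 \<Longrightarrow> \<exists>q. (lead_mon m g, q) \<in> R"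
    and v: "v1 \<in> Smons m" "v2 \<in> Smons m" "rees_exp m a b v1 = rees_exp m a b v2" "lex_less m v2 v1"
  shows "\<not> irred R v1"
proof -
  have ne: "v1 \<noteq> v2" using v(4) lex_less_irrefl by metis
  define f where "f = monom v1 1 - monom v2 (1::'k)"
  have "f \<in> Lideal m a b"
    unfolding Lideal_def rees_map_def f_def using binom_in_Sring[OF v(1,2)] mon_map_binom[OF ne v(3)] by simp
  moreover have "f \<noteq> 0" unfolding f_def using binom_neq_zero[OF ne] .
  ultimately have "1 * init m f \<in> init_ideal m (Lideal m a b)"
    unfolding init_ideal_def by (intro ideal_gen_mult_gen polys_in_one) blast
  moreover have "init m f = monom v1 1" unfolding init_def f_def lead_mon_binom[OF v(4)] ..
  moreover have "{init m g | g. g \<in> G \<and> g \<noteq> 0} = {monom p 1 | p. p \<in> lead_mon m ` (G - {0})}"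
    unfolding init_def by blast
  ultimately have "monom v1 1 \<in> ideal_gen (Sring m) {monom p (1::'k) | p. p \<in> lead_mon m ` (G - {0})}"
    using GB unfolding groebner_basis_def by simp
  moreover have "v1 \<in> keys (monom v1 (1::'k))" by (simp add: monom_def)
  ultimately obtain g where "g \<in> G" "g \<noteq> 0" "mon_dvd (lead_mon m g) v1"
    using keys_monomial_ideal by blast
  then show ?thesis using leads unfolding irred_def by blast
qed

lemma irred_unique_in_rees_fibre:
  assumes "groebner_basis m G (Lideal m a b :: ('k::comm_ring_1) mpoly set)"
    and "\<And>g. g \<in> G \<Longrightarrow> g \<noteq> 0 \<Longrightarrow> \<exists>q. (lead_mon m g, q) \<in> R"
    and "v1 \<in> Smons m" "v2 \<in> Smons m" "rees_exp m a b v1 = rees_exp m a b v2" "irred R v1" "irred R v2"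
  shows "v1 = v2"
  using lex_less_total[OF assms(3,4)] reducible_in_rees_fibre[OF assms(1,2)] assms(3-7) by metis

text \<open>\<open>R\<close> will be the rule set of an initial segment of the Groebner basis and \<open>RN\<close> that of the
  whole basis. The rules with W-free left-hand side are the \<open>X_i X_j\<close>-rules, whose right-hand
  sides contain \<open>T_i^a_i\<close>.\<close>

locale W_truncation =
  fixes m :: nat and a b :: "nat \<Rightarrow> nat" and K :: nat and R RN :: "(mon \<times> mon) set"
  assumes decreasing: "lex_decreasing m R"
    and rees_preserving: "\<And>p q. (p, q) \<in> R \<Longrightarrow> rees_exp m a b p = rees_exp m a b q"
    and rhs_W_free: "\<And>p q. (p, q) \<in> R \<Longrightarrow> lookup q Wv = 0"
    and lhs_W_le: "\<And>p q. (p, q) \<in> R \<Longrightarrow> lookup p Wv \<le> K"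
    and omitted_W_ge: "\<And>p q. (p, q) \<in> RN \<Longrightarrow> (p, q) \<notin> R \<Longrightarrow> K \<le> lookup p Wv"
    and W_free_lhs: "\<And>p q. (p, q) \<in> R \<Longrightarrow> lookup p Wv = 0 \<Longrightarrow>
                       \<exists>i q'. a i \<le> lookup q (T i) \<and> (WX_lead a b i, q') \<in> R"
    and K_pos: "1 \<le> K"
    and full_unique: "\<And>v1 v2. v1 \<in> Smons m \<Longrightarrow> v2 \<in> Smons m \<Longrightarrow> rees_exp m a b v1 = rees_exp m a b v2
                        \<Longrightarrow> irred RN v1 \<Longrightarrow> irred RN v2 \<Longrightarrow> v1 = v2"
begin

text \<open>If an omitted rule applied to \<open>y\<close>, the W-degree of \<open>y\<close> would be at least \<open>K\<close>, hence equal
  to that of \<open>l\<close>; so the last step used a rule with W-free left-hand side, which leaves some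
  \<open>T_i^a_i\<close> in \<open>y\<close>, and then the rule with left-hand side \<open>W T_i^(a_i - b_i)\<close> applies to \<open>y\<close>.\<close>

lemma irred_full_after_step:
  assumes "(rstep R)\<^sup>*\<^sup>* l x" "rstep R x y" "lookup l Wv \<le> K" "irred R y"
  shows "irred RN y"
  unfolding irred_def
proof
  assume "\<exists>p q. (p, q) \<in> RN \<and> mon_dvd p y"
  then obtain p q where pq: "(p, q) \<in> RN" "mon_dvd p y" by blast
  have "(p, q) \<notin> R" using assms(4) pq(2) unfolding irred_def by blast
  then have "K \<le> lookup p Wv" using omitted_W_ge pq(1) by blast
  moreover have "lookup p Wv \<le> lookup y Wv" using pq(2) unfolding mon_dvd_def by blast
  ultimately have Ky: "K \<le> lookup y Wv" by linarith
  obtain p1 q1 s where p1: "(p1, q1) \<in> R" "x = s + p1" "y = s + q1" using assms(2) unfolding rstep_def by blast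
  have "lookup y Wv = lookup s Wv" using rhs_W_free[OF p1(1)] unfolding p1(3) by (simp add: lookup_add)
  moreover have "lookup x Wv \<le> lookup l Wv" using rsteps_W_le[OF rhs_W_free assms(1)] .
  ultimately have "lookup p1 Wv = 0" using assms(3) Ky unfolding p1(2) by (simp add: lookup_add)
  then obtain i q' where i: "a i \<le> lookup q1 (T i)" "(WX_lead a b i, q') \<in> R" using W_free_lhs p1(1) by blast
  have "a i \<le> lookup y (T i)" using i(1) unfolding p1(3) by (simp add: lookup_add)
  then have "mon_dvd (WX_lead a b i) y" using Ky K_pos by (intro mon_dvd_WX_lead) simp_all
  then show False using assms(4) i(2) unfolding irred_def by blast
qed

lemma full_irred_normal_form:
  assumes l: "l \<in> Smons m" "lookup l Wv \<le> K" and st: "rstep R l l'"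
  obtains v where "(rstep R)\<^sup>*\<^sup>* l' v" "irred RN v" "v \<in> Smons m" "rees_exp m a b v = rees_exp m a b l"
proof -
  have l': "l' \<in> Smons m" using rstep_Smons[OF decreasing st l(1)] .
  obtain v where v: "(rstep R)\<^sup>*\<^sup>* l' v" "irred R v" using normal_form_exists[OF decreasing l'] by blast
  have "irred RN v"
  proof (cases rule: rtranclp.cases[OF v(1)])
    case (2 y)
    then show ?thesis using irred_full_after_step v(2) l(2) converse_rtranclp_into_rtranclp[of "rstep R", OF st] by blast
  qed (use irred_full_after_step[OF rtranclp.rtrancl_refl st l(2)] v(2) in simp)
  moreover have "rees_exp m a b v = rees_exp m a b l"
    using rsteps_rees_exp[OF rees_preserving] v(1) r_into_rtranclp[of "rstep R", OF st] by metis
  ultimately show ?thesis using that v(1) rsteps_Smons[OF decreasing v(1) l'] by blast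
qed

text \<open>It suffices to join the critical pair at the least common multiple \<open>l\<close> of the two
  left-hand sides: its two reducts have \<open>R\<close>-normal forms that are \<open>RN\<close>-irreducible and lie in the
  Rees fibre of \<open>l\<close>, hence coincide.\<close>

lemma loc_confluent: "loc_confluent m R"
  unfolding loc_confluent_def
proof (intro allI impI)
  fix w w1 w2 assume s1: "rstep R w w1" and s2: "rstep R w w2"
  obtain p1 q1 t1 where r1: "(p1, q1) \<in> R" "w = t1 + p1" "w1 = t1 + q1" using s1 unfolding rstep_def by blast
  obtain p2 q2 t2 where r2: "(p2, q2) \<in> R" "w = t2 + p2" "w2 = t2 + q2" using s2 unfolding rstep_def by blast
  define l where "l = p1 + (p2 - p1)"
  define l1 where "l1 = (p2 - p1) + q1"
  define l2 where "l2 = (p1 - p2) + q2"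
  have l_sym: "l = p2 + (p1 - p2)" unfolding l_def by (rule add_diff_lcm)
  have st1: "rstep R l l1" unfolding l_def l1_def using rstepI[OF r1(1), of "p2 - p1"] by (simp add: add.commute)
  have st2: "rstep R l l2" unfolding l_sym l2_def using rstepI[OF r2(1), of "p1 - p2"] by (simp add: add.commute)
  have "p1 \<in> Smons m" "p2 \<in> Smons m" using decreasing r1(1) r2(1) unfolding lex_decreasing_def by blast+
  then have l: "l \<in> Smons m" unfolding l_def using Smons_diff by simp
  have "lookup l Wv = max (lookup p1 Wv) (lookup p2 Wv)" unfolding l_def by (simp add: lookup_add lookup_minus)
  then have lW: "lookup l Wv \<le> K" using lhs_W_le r1(1) r2(1) by simp
  obtain v1 where v1: "(rstep R)\<^sup>*\<^sup>* l1 v1" "irred RN v1" "v1 \<in> Smons m" "rees_exp m a b v1 = rees_exp m a b l"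
    using full_irred_normal_form[OF l lW st1] by blast
  obtain v2 where v2: "(rstep R)\<^sup>*\<^sup>* l2 v2" "irred RN v2" "v2 \<in> Smons m" "rees_exp m a b v2 = rees_exp m a b l"
    using full_irred_normal_form[OF l lW st2] by blast
  have "v1 = v2" using full_unique v1(2-4) v2(2-4) by simp
  define s where "s = w - l"
  have "w1 = s + l1"
    unfolding s_def l_def l1_def r1(3) using overlap_through_lcm[of t1 p1 t2 p2 q1] r1(2) r2(2) by simp
  moreover have "w2 = s + l2"
    unfolding s_def l_sym l2_def r2(3) using overlap_through_lcm[of t2 p2 t1 p1 q2] r1(2) r2(2) by simp
  ultimately have "(rstep R)\<^sup>*\<^sup>* w1 (s + v1)" "(rstep R)\<^sup>*\<^sup>* w2 (s + v1)"
    using rsteps_add_left v1(1) v2(1) \<open>v1 = v2\<close> by simp_all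
  then show "\<exists>v. (rstep R)\<^sup>*\<^sup>* w1 v \<and> (rstep R)\<^sup>*\<^sup>* w2 v" by blast
qed

end

section \<open>Initial segments of the Groebner basis and their colon ideals\<close>

lemma gen_pairs_cases:
  assumes "pr \<in> gen_pairs m C"
  obtains (XX) i j where "pr = XX_pair i j" "1 \<le> j" "j < i" "i \<le> m"
    | (WX) l where "pr = WX_pair l" "l \<in> {1..m}"
    | (WC) c where "pr = WC_pair m c" "c \<in> C"
  using assms unfolding gen_pairs_def by blast

lemma gen_pairs_mono: "D \<subseteq> C \<Longrightarrow> gen_pairs m D \<subseteq> gen_pairs m C"
  unfolding gen_pairs_def by blast

lemma lookup_WX_rule_lhs:
  fixes a b :: "nat \<Rightarrow> nat"
  assumes "l \<in> {1..m}" "b l < a l"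
  shows "lookup (fst (Pbin_rule m a b (WX_pair l))) Wv = 1"
    and "lookup (fst (Pbin_rule m a b (WX_pair l))) (X k) = 0"
  unfolding WX_rule(2)[where a=a and b=b, OF assms] lookup_WX_lead by simp_all

lemma W_truncation_initial_segment:
  fixes a b :: "nat \<Rightarrow> nat" and C D :: "(nat \<Rightarrow> nat) set"
  assumes ab: "\<forall>i\<in>{1..m}. b i < a i" and C: "\<forall>c\<in>C. 1 \<le> vabs m c"
    and GB: "groebner_basis m (gen_binoms m a b C) (Lideal m a b :: ('k::comm_ring_1) mpoly set)"
    and D: "D \<subseteq> C" "\<forall>c\<in>D. vabs m c \<le> K" "\<forall>c\<in>C - D. K \<le> vabs m c" and K: "1 \<le> K"
  shows "W_truncation m a b K (Pbin_rule m a b ` gen_pairs m D) (Pbin_rule m a b ` gen_pairs m C)"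
proof -
  let ?R = "Pbin_rule m a b ` gen_pairs m D" and ?RN = "Pbin_rule m a b ` gen_pairs m C"
  have adm: "admissible m a b (Pbin_rule m a b pr)" if "pr \<in> gen_pairs m C" for pr
    using admissible_gen_pairs[OF ab C that] .
  have admD: "admissible m a b r" if "r \<in> ?R" for r
    using that adm gen_pairs_mono[OF D(1)] by blast
  have dec: "lex_decreasing m ?R" and rees: "\<And>p q. (p, q) \<in> ?R \<Longrightarrow> rees_exp m a b p = rees_exp m a b q"
    and rhs: "\<And>p q. (p, q) \<in> ?R \<Longrightarrow> lookup q Wv = 0"
    using admD unfolding lex_decreasing_def admissible_def by fastforce+
  have lhs: "lookup p Wv \<le> K" if pq: "(p, q) \<in> ?R" for p q
  proof -
    obtain pr where pr: "pr \<in> gen_pairs m D" "(p, q) = Pbin_rule m a b pr" using pq by blast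
    from pr(1) show ?thesis
    proof (cases rule: gen_pairs_cases)
      case XX then show ?thesis using pr(2) XX_rule(2) by (metis fst_conv zero_le)
    next
      case WX then show ?thesis using pr(2) ab lookup_WX_rule_lhs(1) K by (metis fst_conv)
    next
      case WC then show ?thesis using pr(2) WC_rule(2) C D by (metis fst_conv subsetD)
    qed
  qed
  have omitted: "K \<le> lookup p Wv" if pq: "(p, q) \<in> ?RN" "(p, q) \<notin> ?R" for p q
  proof -
    obtain pr where pr: "pr \<in> gen_pairs m C" "(p, q) = Pbin_rule m a b pr" using pq(1) by blast
    have notD: "pr \<notin> gen_pairs m D" using pq(2) pr(2) by force
    with pr(1) obtain c where c: "pr = WC_pair m c" "c \<in> C"
      by (cases rule: gen_pairs_cases) (auto simp: gen_pairs_def)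
    then have "c \<notin> D" using notD unfolding gen_pairs_def by blast
    then show ?thesis using c pr(2) WC_rule(2)[of m c a b] C D(3) by (metis DiffI fst_conv)
  qed
  have W_free: "\<exists>i q'. a i \<le> lookup q (T i) \<and> (WX_lead a b i, q') \<in> ?R"
    if pq: "(p, q) \<in> ?R" "lookup p Wv = 0" for p q
  proof -
    obtain pr where pr: "pr \<in> gen_pairs m D" "(p, q) = Pbin_rule m a b pr" using pq(1) by blast
    from pr(1) show ?thesis
    proof (cases rule: gen_pairs_cases)
      case (XX i j)
      have "WX_pair i \<in> gen_pairs m D" "i \<in> {1..m}" using XX(2-4) unfolding gen_pairs_def by auto
      moreover have "a i \<le> lookup q (T i)" using XX_rule(3)[OF XX(2-4)] pr(2) XX(1) by (metis snd_conv)
      ultimately show ?thesis using WX_rule(2) ab by (metis image_eqI prod.collapse)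
    next
      case WX then show ?thesis using pq(2) pr(2) ab lookup_WX_rule_lhs(1) by (metis fst_conv zero_neq_one)
    next
      case WC then show ?thesis using pq(2) pr(2) WC_rule(2) C D(1) by (metis fst_conv not_one_le_zero subsetD)
    qed
  qed
  have full_unique: "v1 = v2"
    if "v1 \<in> Smons m" "v2 \<in> Smons m" "rees_exp m a b v1 = rees_exp m a b v2" "irred ?RN v1" "irred ?RN v2"
    for v1 v2
  proof (rule irred_unique_in_rees_fibre[OF GB _ that])
    fix g :: "'k mpoly" assume "g \<in> gen_binoms m a b C"
    then obtain pr where "pr \<in> gen_pairs m C" "g = Pbin m a b (fst pr) (snd pr)" unfolding gen_binoms_def by blast
    then show "\<exists>q. (lead_mon m g, q) \<in> ?RN" using Pbin_pair_binom(2)[OF adm] by (metis image_eqI prod.collapse)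
  qed
  show ?thesis by (rule W_truncation.intro[OF dec rees rhs lhs omitted W_free K full_unique])
qed

lemma lead_mon_dvd_initial_segment:
  fixes a b :: "nat \<Rightarrow> nat" and C D :: "(nat \<Rightarrow> nat) set" and h :: "'k::comm_ring_1 mpoly"
  assumes ab: "\<forall>i\<in>{1..m}. b i < a i" and C: "\<forall>c\<in>C. 1 \<le> vabs m c"
    and GB: "groebner_basis m (gen_binoms m a b C) (Lideal m a b :: 'k mpoly set)"
    and D: "D \<subseteq> C" "\<forall>c\<in>D. vabs m c \<le> K" "\<forall>c\<in>C - D. K \<le> vabs m c" and K: "1 \<le> K"
    and h: "h \<in> ideal_gen (Sring m) (gen_binoms m a b D)" "h \<noteq> 0"
  shows "\<exists>pr\<in>gen_pairs m D. mon_dvd (fst (Pbin_rule m a b pr)) (lead_mon m h)"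
proof -
  let ?R = "Pbin_rule m a b ` gen_pairs m D"
  interpret W_truncation m a b K ?R "Pbin_rule m a b ` gen_pairs m C"
    by (rule W_truncation_initial_segment[OF ab C GB D K])
  have admD: "admissible m a b r" if "r \<in> ?R" for r
    using that admissible_gen_pairs[OF ab C] gen_pairs_mono[OF D(1)] by blast
  have binoms: "\<exists>p q. (p, q) \<in> ?R \<and> g = monom p 1 - monom q 1"
    if g: "g \<in> gen_binoms m a b D" for g :: "'k mpoly"
  proof -
    obtain pr where pr: "pr \<in> gen_pairs m D" "g = Pbin m a b (fst pr) (snd pr)"
      using g unfolding gen_binoms_def by blast
    then show ?thesis using Pbin_pair_binom(1)[OF admD] by (metis image_eqI prod.collapse)
  qed
  have "gen_binoms m a b D \<subseteq> (Sring m :: 'k mpoly set)"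
    using Pbin_pair_binom(4)[OF admD] unfolding gen_binoms_def by blast
  then have "h \<in> Sring m" using ideal_gen_polys_in_subset h(1) by blast
  then have "\<not> irred ?R (lead_mon m h)" using lead_mon_reducible[OF decreasing loc_confluent binoms h(1) _ h(2)] by blast
  then obtain pr where "pr \<in> gen_pairs m D" "mon_dvd (fst (Pbin_rule m a b pr)) (lead_mon m h)"
    unfolding irred_def by (metis (no_types, lifting) fst_conv imageE)
  then show ?thesis by blast
qed

definition T_part :: "nat \<Rightarrow> mon \<Rightarrow> mon" where
  "T_part m \<alpha> = (\<Sum>i\<in>{1..m}. Poly_Mapping.single (T i) (lookup \<alpha> (T i)))"

lemma lookup_T_part:
  "lookup (T_part m \<alpha>) v = (case v of T i \<Rightarrow> (if i \<in> {1..m} then lookup \<alpha> (T i) else 0) | _ \<Rightarrow> 0)"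
  unfolding T_part_def lookup_sum_single_T ..

lemma lookup_T_part_T: "\<alpha> \<in> Smons m \<Longrightarrow> lookup (T_part m \<alpha>) (T i) = lookup \<alpha> (T i)"
  unfolding lookup_T_part Smons_def Svars_def by (auto simp: in_keys_iff)

lemma mon_dvd_T_part: "mon_dvd (T_part m \<alpha>) \<alpha>"
  unfolding mon_dvd_def lookup_T_part by (auto split: var.split)

lemma keys_T_part: "keys (T_part m \<alpha>) \<subseteq> Rvars m"
proof
  fix v assume "v \<in> keys (T_part m \<alpha>)"
  then show "v \<in> Rvars m" unfolding Rvars_def by (cases v) (auto simp: in_keys_iff lookup_T_part split: if_splits)
qed

lemma T_part_Smons: "T_part m \<alpha> \<in> Smons m"
  using keys_T_part unfolding Smons_def Rvars_def Svars_def by blast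

text \<open>Left-hand sides containing W contain no \<open>X_k\<close> and have W-degree at most \<open>K\<close>, so whether
  they divide \<open>x^\<alpha> x^M\<close> only depends on the T-part of \<open>x^\<alpha>\<close>. If an \<open>X_i X_j\<close>-rule divides,
  then so does the \<open>W X_j\<close>-rule, whose left-hand side is \<open>W T_j^(a_j - b_j)\<close>.\<close>

lemma lhs_dvd_T_part_add:
  fixes a b :: "nat \<Rightarrow> nat"
  assumes ab: "\<forall>i\<in>{1..m}. b i < a i" and K: "1 \<le> K" and \<alpha>: "\<alpha> \<in> Smons m"
    and M: "lookup M Wv = K" "\<And>k. lookup M (X k) = 0"
    and D: "\<forall>c\<in>D. 1 \<le> vabs m c \<and> vabs m c \<le> K"
    and pr: "pr \<in> gen_pairs m D" and dvd: "mon_dvd (fst (Pbin_rule m a b pr)) (\<alpha> + M)"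
  shows "\<exists>pr'\<in>gen_pairs m D. mon_dvd (fst (Pbin_rule m a b pr')) (T_part m \<alpha> + M)"
proof -
  let ?p = "fst (Pbin_rule m a b pr)" and ?y = "T_part m \<alpha> + M"
  have T: "lookup ?y (T i) = lookup (\<alpha> + M) (T i)" for i
    using lookup_T_part_T[OF \<alpha>] by (simp add: lookup_add)
  have W: "lookup ?y Wv = K" using M(1) by (simp add: lookup_add lookup_T_part)
  have dvd_if_W: "mon_dvd ?p ?y" if "lookup ?p Wv \<le> K" "\<And>k. lookup ?p (X k) = 0" "?p \<in> Smons m"
    unfolding mon_dvd_def
  proof
    fix v
    show "lookup ?p v \<le> lookup ?y v"
      using that dvd T W lookup_Zv_Smons[OF that(3)] unfolding mon_dvd_def by (cases v) auto
  qed
  have p: "?p \<in> Smons m" using admissible_gen_pairs[OF ab _ pr] D unfolding admissible_def by blast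
  from pr show ?thesis
  proof (cases rule: gen_pairs_cases)
    case (XX i j)
    have j: "j \<in> {1..m}" using XX by simp
    have "a j \<le> lookup (\<alpha> + M) (T j)"
      using dvd XX_rule(4)[OF XX(2-4), of a b] unfolding XX(1) mon_dvd_def by metis
    moreover have "fst (Pbin_rule m a b (WX_pair j)) = WX_lead a b j" using WX_rule(2) j ab by blast
    ultimately have "mon_dvd (fst (Pbin_rule m a b (WX_pair j))) ?y"
      using T W K by (simp add: mon_dvd_WX_lead)
    moreover have "WX_pair j \<in> gen_pairs m D" using j unfolding gen_pairs_def by blast
    ultimately show ?thesis by blast
  next
    case (WX l)
    then have "mon_dvd ?p ?y" using ab K p by (intro dvd_if_W) (simp_all add: lookup_WX_rule_lhs)
    then show ?thesis using pr by blast
  next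
    case (WC c)
    then have "mon_dvd ?p ?y" using D p by (intro dvd_if_W) (simp_all add: WC_rule)
    then show ?thesis using pr by blast
  qed
qed

lemma monom_in_monomial_ideal:
  assumes "p \<in> P" "mon_dvd p \<beta>" "\<beta> \<in> Smons m"
  shows "monom \<beta> (1::'k::comm_ring_1) \<in> ideal_gen (Sring m) {monom p 1 | p. p \<in> P}"
proof -
  have "monom \<beta> (1::'k) = monom (\<beta> - p) 1 * monom p 1"
    unfolding monom_def mult_single using mon_dvd_diff_add[OF assms(2)] by simp
  moreover have "monom (\<beta> - p) (1::'k) \<in> Sring m"
    using Smons_diff[OF assms(3)] unfolding Smons_def by (intro polys_in_monom) simp
  ultimately show ?thesis using assms(1) by (auto intro: ideal_gen_mult_gen)
qed

lemma ideal_gen_colon_inter_subset: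
  fixes f :: "('k::comm_ring_1) mpoly" and V :: "var set" and G A :: "'k mpoly set"
  defines "J \<equiv> colon_ideal (polys_in V) (ideal_gen (polys_in V) G) f"
  shows "ideal_gen (polys_in V) (J \<inter> A) \<subseteq> J"
proof
  fix x assume x: "x \<in> ideal_gen (polys_in V) (J \<inter> A)"
  obtain F c where F: "finite F" "F \<subseteq> J \<inter> A" "\<forall>g\<in>F. c g \<in> polys_in V" "x = (\<Sum>g\<in>F. c g * g)"
    using x unfolding ideal_gen_def by blast
  have "J \<subseteq> polys_in V" unfolding J_def colon_ideal_def by blast
  then have "x \<in> polys_in V" using ideal_gen_polys_in_subset x by blast
  moreover have "x * f = (\<Sum>g\<in>F. c g * (g * f))"
    unfolding F(4) sum_distrib_right by (simp add: mult.assoc)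
  moreover have "\<dots> \<in> ideal_gen (polys_in V) G"
  proof (rule ideal_gen_sum[OF polys_in_zero polys_in_add F(1)])
    fix g assume g: "g \<in> F"
    then have "g * f \<in> ideal_gen (polys_in V) G" using F(2) unfolding J_def colon_ideal_def by blast
    then show "c g * (g * f) \<in> ideal_gen (polys_in V) G"
      using ideal_gen_mult_left[OF polys_in_mult] F(3) g by blast
  qed
  ultimately show "x \<in> J" unfolding J_def colon_ideal_def by simp
qed

lemma colon_monomial_ideal_extended:
  fixes m :: nat and M :: mon and P :: "mon set"
  defines "I \<equiv> ideal_gen (Sring m) {monom p (1::'k::comm_ring_1) | p. p \<in> P}"
  defines "J \<equiv> colon_ideal (Sring m) I (monom M 1)"
  assumes M: "M \<in> Smons m"
    and T_part: "\<And>\<alpha>. \<alpha> \<in> Smons m \<Longrightarrow> \<exists>p\<in>P. mon_dvd p (\<alpha> + M) \<Longrightarrow> \<exists>p\<in>P. mon_dvd p (T_part m \<alpha> + M)"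
  shows "J = ideal_gen (Sring m) (J \<inter> Rring m)"
proof
  show "ideal_gen (Sring m) (J \<inter> Rring m) \<subseteq> J"
    unfolding J_def I_def by (rule ideal_gen_colon_inter_subset)
  show "J \<subseteq> ideal_gen (Sring m) (J \<inter> Rring m)"
  proof
    fix g assume g: "g \<in> J"
    then have gS: "g \<in> Sring m" and gM: "g * monom M 1 \<in> I" unfolding J_def colon_ideal_def by blast+
    have "Poly_Mapping.single \<alpha> (lookup g \<alpha>) \<in> ideal_gen (Sring m) (J \<inter> Rring m)" if \<alpha>: "\<alpha> \<in> keys g" for \<alpha>
    proof -
      have \<alpha>S: "\<alpha> \<in> Smons m" using gS \<alpha> unfolding Sring_iff_keys by blast
      have "lookup (g * monom M 1) (\<alpha> + M) = lookup g \<alpha>"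
        unfolding monom_def using lookup_mult_single_shift[of g M "1::'k" \<alpha>] by simp
      then have "\<alpha> + M \<in> keys (g * monom M 1)" using \<alpha> by (simp add: in_keys_iff)
      then obtain p where "p \<in> P" "mon_dvd p (T_part m \<alpha> + M)"
        using T_part[OF \<alpha>S] keys_monomial_ideal gM unfolding I_def by blast
      then have "monom (T_part m \<alpha> + M) (1::'k) \<in> I"
        unfolding I_def using T_part_Smons M by (intro monom_in_monomial_ideal) auto
      moreover have "monom (T_part m \<alpha>) (1::'k) * monom M 1 = monom (T_part m \<alpha> + M) 1"
        unfolding monom_def mult_single by simp
      moreover have "monom (T_part m \<alpha>) (1::'k) \<in> Rring m" by (rule polys_in_monom[OF keys_T_part])
      moreover have "monom (T_part m \<alpha>) (1::'k) \<in> Sring m"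
        using T_part_Smons[of m \<alpha>] unfolding Smons_def by (intro polys_in_monom) simp
      ultimately have TJ: "monom (T_part m \<alpha>) (1::'k) \<in> J \<inter> Rring m"
        unfolding J_def colon_ideal_def by simp
      have "Poly_Mapping.single \<alpha> (lookup g \<alpha>) = monom (\<alpha> - T_part m \<alpha>) (lookup g \<alpha>) * monom (T_part m \<alpha>) 1"
        unfolding monom_def mult_single using mon_dvd_diff_add[OF mon_dvd_T_part[of m \<alpha>]] by simp
      also have "\<dots> \<in> ideal_gen (Sring m) (J \<inter> Rring m)"
        using TJ Smons_diff[OF \<alpha>S] unfolding Smons_def by (intro ideal_gen_mult_gen polys_in_monom) auto
      finally show ?thesis .
    qed
    then have "(\<Sum>\<alpha>\<in>keys g. Poly_Mapping.single \<alpha> (lookup g \<alpha>)) \<in> ideal_gen (Sring m) (J \<inter> Rring m)"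
      by (intro ideal_gen_sum[OF polys_in_zero polys_in_add]) simp_all
    then show "g \<in> ideal_gen (Sring m) (J \<inter> Rring m)" using poly_mapping_sum_single[of g] by simp
  qed
qed

lemma lead_mon_dvd_T_part_initial_segment:
  fixes a b :: "nat \<Rightarrow> nat" and C D :: "(nat \<Rightarrow> nat) set" and h :: "'k::comm_ring_1 mpoly"
  assumes ab: "\<forall>i\<in>{1..m}. b i < a i" and C: "\<forall>c\<in>C. 1 \<le> vabs m c"
    and GB: "groebner_basis m (gen_binoms m a b C) (Lideal m a b :: 'k mpoly set)"
    and D: "D \<subseteq> C" "\<forall>c\<in>D. vabs m c \<le> K" "\<forall>c\<in>C - D. K \<le> vabs m c" and K: "1 \<le> K"
    and M: "lookup M Wv = K" "\<And>k. lookup M (X k) = 0" and \<alpha>: "\<alpha> \<in> Smons m"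
    and h: "h \<in> ideal_gen (Sring m) (gen_binoms m a b D)" "h \<noteq> 0" "mon_dvd (lead_mon m h) (\<alpha> + M)"
  shows "\<exists>h'\<in>ideal_gen (Sring m) (gen_binoms m a b D :: 'k mpoly set) - {0}. mon_dvd (lead_mon m h') (T_part m \<alpha> + M)"
proof -
  obtain pr where pr: "pr \<in> gen_pairs m D" "mon_dvd (fst (Pbin_rule m a b pr)) (lead_mon m h)"
    using lead_mon_dvd_initial_segment[OF ab C GB D K h(1,2)] by blast
  have "mon_dvd (fst (Pbin_rule m a b pr)) (\<alpha> + M)" using pr(2) h(3) by (rule mon_dvd_trans)
  moreover have "\<forall>d\<in>D. 1 \<le> vabs m d \<and> vabs m d \<le> K" using C D(1,2) by blast
  ultimately obtain pr' where pr': "pr' \<in> gen_pairs m D" "mon_dvd (fst (Pbin_rule m a b pr')) (T_part m \<alpha> + M)"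
    using lhs_dvd_T_part_add[OF ab K \<alpha> M _ pr(1)] by blast
  have adm: "admissible m a b (Pbin_rule m a b pr')"
    using admissible_gen_pairs[OF ab C] pr'(1) gen_pairs_mono[OF D(1)] by blast
  have "1 * Pbin m a b (fst pr') (snd pr') \<in> ideal_gen (Sring m) (gen_binoms m a b D :: 'k mpoly set)"
    unfolding gen_binoms_def using pr'(1) by (intro ideal_gen_mult_gen polys_in_one) blast
  moreover have "Pbin m a b (fst pr') (snd pr') \<noteq> (0::'k mpoly)" by (rule Pbin_pair_binom(3)[OF adm])
  moreover have "lead_mon m (Pbin m a b (fst pr') (snd pr') :: 'k mpoly) = fst (Pbin_rule m a b pr')"
    by (rule Pbin_pair_binom(2)[OF adm])
  ultimately show ?thesis using pr'(2) by (intro bexI[of _ "Pbin m a b (fst pr') (snd pr')"]) simp_all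
qed

lemma colon_initial_segment_extended:
  fixes a b :: "nat \<Rightarrow> nat" and C D :: "(nat \<Rightarrow> nat) set" and c :: "nat \<Rightarrow> nat"
  assumes ab: "\<forall>i\<in>{1..m}. b i < a i" and C: "\<forall>c\<in>C. 1 \<le> vabs m c"
    and GB: "groebner_basis m (gen_binoms m a b C) (Lideal m a b :: ('k::comm_ring_1) mpoly set)"
    and D: "D \<subseteq> C" "\<forall>d\<in>D. vabs m d \<le> vabs m c" "\<forall>d\<in>C - D. vabs m c \<le> vabs m d" and c: "c \<in> C"
  defines "H \<equiv> ideal_gen (Sring m) (gen_binoms m a b D :: 'k mpoly set)"
  defines "J \<equiv> colon_ideal (Sring m) (init_ideal m H) (init m (Pbin m a b (Wmon (vabs m c)) (Xmon m c)))"
  shows "J = ideal_gen (Sring m) (J \<inter> Rring m)"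
proof -
  define M where "M = fst (Pbin_rule m a b (WC_pair m c))"
  have K: "1 \<le> vabs m c" using C c by blast
  have M: "M \<in> Smons m" "lookup M Wv = vabs m c" "\<And>k. lookup M (X k) = 0"
    using WC_rule[OF K, of a b] unfolding M_def admissible_def by blast+
  have "lead_mon m (Pbin m a b (Wmon (vabs m c)) (Xmon m c) :: 'k mpoly) = M"
    using Pbin_pair_binom(2)[OF WC_rule(1)[OF K, of a b], where 'k='k] unfolding M_def WC_pair_def by simp
  then have "init m (Pbin m a b (Wmon (vabs m c)) (Xmon m c) :: 'k mpoly) = monom M 1"
    unfolding init_def by simp
  moreover have "init_ideal m H = ideal_gen (Sring m) {monom p 1 | p. p \<in> lead_mon m ` (H - {0})}"
    unfolding init_ideal_def init_def by (rule arg_cong) blast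
  moreover have "\<exists>p\<in>lead_mon m ` (H - {0}). mon_dvd p (T_part m \<alpha> + M)"
    if \<alpha>: "\<alpha> \<in> Smons m" and dvd: "\<exists>p\<in>lead_mon m ` (H - {0}). mon_dvd p (\<alpha> + M)" for \<alpha>
  proof -
    obtain h where "h \<in> H" "h \<noteq> 0" "mon_dvd (lead_mon m h) (\<alpha> + M)" using dvd by blast
    then obtain h' where "h' \<in> H - {0}" "mon_dvd (lead_mon m h') (T_part m \<alpha> + M)"
      using lead_mon_dvd_T_part_initial_segment[OF ab C GB D K M(2,3) \<alpha>] unfolding H_def by blast
    then show ?thesis by blast
  qed
  ultimately show ?thesis unfolding J_def
    using colon_monomial_ideal_extended[OF M(1), of "lead_mon m ` (H - {0})", where 'k='k] by simp
qed

lemma sorted_tau'_prefix_vabs: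
  assumes sorted: "sorted_wrt (tau'_less m) cs" and k: "k < length cs"
  shows "\<forall>d\<in>(!) cs ` {..<k}. vabs m d \<le> vabs m (cs ! k)"
    and "\<forall>d\<in>set cs - (!) cs ` {..<k}. vabs m (cs ! k) \<le> vabs m d"
proof -
  have mono: "vabs m (cs ! i) \<le> vabs m (cs ! i')" if "i \<le> i'" "i' < length cs" for i i'
  proof (cases "i = i'")
    case False
    then have "tau'_less m (cs ! i) (cs ! i')" using sorted_wrt_nth_less[OF sorted] that by simp
    then show ?thesis unfolding tau'_less_def by linarith
  qed simp
  show "\<forall>d\<in>(!) cs ` {..<k}. vabs m d \<le> vabs m (cs ! k)"
    using k mono by auto
  show "\<forall>d\<in>set cs - (!) cs ` {..<k}. vabs m (cs ! k) \<le> vabs m d"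
  proof
    fix d assume "d \<in> set cs - (!) cs ` {..<k}"
    then obtain i where "i < length cs" "d = cs ! i" "\<not> i < k" by (auto simp: in_set_conv_nth)
    then show "vabs m (cs ! k) \<le> vabs m d" using mono by simp
  qed
qed

theorem proposition3p2:
  fixes m :: nat and a b :: "nat \<Rightarrow> nat"
    and C :: "(nat \<Rightarrow> nat) set" and cs :: "(nat \<Rightarrow> nat) list"
  assumes m3: "m \<ge> 3"
    and ab: "\<forall>i\<in>{1..m}. b i < a i"
    and b2: "card {i\<in>{1..m}. b i \<noteq> 0} \<ge> 2"
    and Cfin: "finite C"
    and Csub: "C \<subseteq> {c \<in> Nvec m. vabs m c \<ge> 2}"
    and GB: "groebner_basis m
               (Gamma0 m a b \<union> {Pbin m a b (Wmon (vabs m c)) (Xmon m c) | c. c \<in> C})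
               (Lideal m a b :: ('k::field) mpoly set)"
    and Cclosed: "\<forall>c\<in>C. \<forall>c'\<in>Nvec m. vabs m c' \<ge> 2 \<and> tau'_less m c' c \<longrightarrow> c' \<in> C"
    and cs_set: "set cs = C"
    and cs_sorted: "sorted_wrt (tau'_less m) cs"
  shows "\<forall>j\<in>{1..length cs}.
           (let H = ideal_gen (Sring m)
                      (Gamma0 m a b \<union>
                       {Pbin m a b (Wmon (vabs m (cs ! i))) (Xmon m (cs ! i)) | i. i < j - 1});
                J = colon_ideal (Sring m) (init_ideal m H)
                      (init m (Pbin m a b (Wmon (vabs m (cs ! (j - 1)))) (Xmon m (cs ! (j - 1)))
                         :: 'k mpoly))
            in J = ideal_gen (Sring m) (J \<inter> Rring m))"
  apply (intro ballI)
  subgoal premises j_range for j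
  proof -
    have k: "j - 1 < length cs" using j_range by auto
    define D where "D = (!) cs ` {..<j - 1}"
    have "{Pbin m a b (Wmon (vabs m (cs ! i))) (Xmon m (cs ! i)) | i. i < j - 1}
            = ({Pbin m a b (Wmon (vabs m c)) (Xmon m c) | c. c \<in> D} :: 'k mpoly set)"
      unfolding D_def by blast
    then have gens: "Gamma0 m a b \<union> {Pbin m a b (Wmon (vabs m (cs ! i))) (Xmon m (cs ! i)) | i. i < j - 1}
                       = (gen_binoms m a b D :: 'k mpoly set)"
      unfolding gen_binoms_eq[symmetric] by simp
    have C: "\<forall>c\<in>C. 1 \<le> vabs m c" using Csub by auto
    have D: "D \<subseteq> C" "cs ! (j - 1) \<in> C" using cs_set k unfolding D_def by auto
    note vabs_bounds = sorted_tau'_prefix_vabs[OF cs_sorted k, folded D_def, unfolded cs_set]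
    show ?thesis
      unfolding Let_def gens
      by (rule colon_initial_segment_extended[OF ab C GB[unfolded gen_binoms_eq] D(1) vabs_bounds D(2)])
  qed
  done

end
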